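(* Let $e>1$ be odd, $t\ge0$, $\mathbf c=(t+(1-e)/2,0)$, and let $\mu$ be a bipartition. Let $0\le j_1\ne j_2\le e-1$ and suppose $\tilde f_{j_i}|\mu,\mathbf c\rangle\ne0$ for $i=1,2$; write $\tilde f_{j_i}|\mu,\mathbf c\rangle=|\nu_i,\mathbf c\rangle$. Then the $e$-cores of $\Phi_t(\nu_1)$ and $\Phi_t(\nu_2)$ are distinct.
   Context: Crystal graph $\mathcal G_{\mathbf c,e}$: vertices $|\nu,\mathbf c\rangle$, $\nu$ a bipartition; nodes $(a,b,j)$ of $\nu^j$ have content $b-a+c_j$ and residue content mod $e$; for residue $i$ order the addable and removable $i$-nodes by increasing content (ties: larger $j$ first), write them as a word in $A$ (addable)/$R$ (removable), cancel consecutive $RA$ recursively to obtain $A^\alpha R^\beta$; if $\alpha>0$ the good addable $i$-node is that of the rightmost $A$. The Kashiwara operator $\tilde f_i$ maps $|\nu,\mathbf c\rangle$ to $|\nu\cup\{\gamma\},\mathbf c\rangle$ where $\gamma$ is the good addable $i$-node of $\nu$, and to $0$ if there is none. $\Delta_t=(t,\dots,1)$. For a partition $\lambda$ with $\beta$-set $B$ of odd size, $\lambda^{(2)}=(\pi\{x/2:x\in B\text{ even}\},\pi\{(x-1)/2:x\in B\text{ odd}\})$, $\pi(X)$ the partition with $\beta$-set $X$; if $\lambda$ has $2$-core $\Delta_t$, $\bar\lambda^{(2)}$ equals $\lambda^{(2)}$ for $t$ even and the swapped pair for $t$ odd; $\Phi_t(\nu)$ is the unique partition with $2$-core $\Delta_t$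 and $\bar\lambda^{(2)}=\nu$. *)

theory Defs
  imports Main
begin

definition is_partition :: "nat list \<Rightarrow> bool" where
  "is_partition lam \<longleftrightarrow> sorted_wrt (\<ge>) lam \<and> 0 \<notin> set lam"

definition part :: "nat list \<Rightarrow> nat \<Rightarrow> nat" where
  "part lam i = (if 1 \<le> i \<and> i \<le> length lam then lam ! (i - 1) else 0)"

text \<open>Young diagram: nodes (a,b), row a, column b, both 1-based.\<close>
definition dg :: "nat list \<Rightarrow> (nat \<times> nat) set" where
  "dg lam = {(a, b). 1 \<le> a \<and> a \<le> length lam \<and> 1 \<le> b \<and> b \<le> lam ! (a - 1)}"

definition addable :: "nat list \<Rightarrow> nat \<times> nat \<Rightarrow> bool" where
  "addable lam n \<longleftrightarrow> (case n of (a, b) \<Rightarrow>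
     1 \<le> a \<and> 1 \<le> b \<and> (a, b) \<notin> dg lam \<and>
     (a = 1 \<or> (a - 1, b) \<in> dg lam) \<and> (b = 1 \<or> (a, b - 1) \<in> dg lam))"

definition removable :: "nat list \<Rightarrow> nat \<times> nat \<Rightarrow> bool" where
  "removable lam n \<longleftrightarrow> (case n of (a, b) \<Rightarrow>
     (a, b) \<in> dg lam \<and> (a + 1, b) \<notin> dg lam \<and> (a, b + 1) \<notin> dg lam)"

definition part_of_dg :: "(nat \<times> nat) set \<Rightarrow> nat list" where
  "part_of_dg D = (THE lam. is_partition lam \<and> dg lam = D)"

type_synonym bipartition = "nat list \<times> nat list"

definition comp :: "bipartition \<Rightarrow> nat \<Rightarrow> nat list" where
  "comp nu j = (if j = 1 then fst nu else snd nu)"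

text \<open>Nodes of a bipartition: triples (a,b,j) with (a,b) a node of nu^j, j \<in> {1,2}.
  The multicharge c = (c_1, c_2) is a pair of integers.\<close>
definition content :: "int \<times> int \<Rightarrow> nat \<times> nat \<times> nat \<Rightarrow> int" where
  "content c n = (case n of (a, b, j) \<Rightarrow>
     int b - int a + (if j = 1 then fst c else snd c))"

definition residue :: "nat \<Rightarrow> int \<times> int \<Rightarrow> nat \<times> nat \<times> nat \<Rightarrow> int" where
  "residue e c n = content c n mod int e"

definition addable_node :: "bipartition \<Rightarrow> nat \<times> nat \<times> nat \<Rightarrow> bool" where
  "addable_node nu n \<longleftrightarrow> (case n of (a, b, j) \<Rightarrow>
     (j = 1 \<or> j = 2) \<and> addable (comp nu j) (a, b))"

definition removable_node :: "bipartition \<Rightarrow> nat \<times> nat \<times> nat \<Rightarrow> bool" where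
  "removable_node nu n \<longleftrightarrow> (case n of (a, b, j) \<Rightarrow>
     (j = 1 \<or> j = 2) \<and> removable (comp nu j) (a, b))"

datatype letter = LA | LR

definition node_less :: "int \<times> int \<Rightarrow> nat \<times> nat \<times> nat \<Rightarrow> nat \<times> nat \<times> nat \<Rightarrow> bool" where
  "node_less c x y \<longleftrightarrow> content c x < content c y \<or>
     (content c x = content c y \<and> snd (snd x) > snd (snd y))"

definition sig_set :: "nat \<Rightarrow> int \<times> int \<Rightarrow> nat \<Rightarrow> bipartition \<Rightarrow> (letter \<times> (nat \<times> nat \<times> nat)) set" where
  "sig_set e c i nu =
     {(LA, n) | n. addable_node nu n \<and> residue e c n = int i} \<union>
     {(LR, n) | n. removable_node nu n \<and> residue e c n = int i}"

definition is_sig_word :: "nat \<Rightarrow> int \<times> int \<Rightarrow> nat \<Rightarrow> bipartition \<Rightarrow> (letter \<times> (nat \<times> nat \<times> nat)) list \<Rightarrow> bool" where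
  "is_sig_word e c i nu w \<longleftrightarrow> distinct w \<and> set w = sig_set e c i nu \<and>
     sorted_wrt (\<lambda>x y. node_less c (snd x) (snd y)) w"

definition cancelRA :: "(letter \<times> 'n) list \<Rightarrow> (letter \<times> 'n) list \<Rightarrow> bool" where
  "cancelRA w w' \<longleftrightarrow> (\<exists>u v x y. w = u @ (LR, x) # (LA, y) # v \<and> w' = u @ v)"

definition RA_free :: "(letter \<times> 'n) list \<Rightarrow> bool" where
  "RA_free w \<longleftrightarrow> \<not> (\<exists>u v x y. w = u @ (LR, x) # (LA, y) # v)"

text \<open>gamma is the good addable i-node of nu: it is the node of the rightmost A
  in the reduced word A^alpha R^beta.\<close>
definition good_addable :: "nat \<Rightarrow> int \<times> int \<Rightarrow> nat \<Rightarrow> bipartition \<Rightarrow> nat \<times> nat \<times> nat \<Rightarrow> bool" where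
  "good_addable e c i nu g \<longleftrightarrow> (\<exists>w w'. is_sig_word e c i nu w \<and> cancelRA\<^sup>*\<^sup>* w w' \<and> RA_free w' \<and>
     (\<exists>u v. w' = u @ (LA, g) # v \<and> (\<forall>z \<in> set v. fst z = LR)))"

definition add_node :: "bipartition \<Rightarrow> nat \<times> nat \<times> nat \<Rightarrow> bipartition" where
  "add_node nu n = (case n of (a, b, j) \<Rightarrow>
     (if j = 1 then (part_of_dg (dg (fst nu) \<union> {(a, b)}), snd nu)
      else (fst nu, part_of_dg (dg (snd nu) \<union> {(a, b)}))))"

text \<open>Kashiwara operator: None stands for 0.\<close>
definition ftilde :: "nat \<Rightarrow> int \<times> int \<Rightarrow> nat \<Rightarrow> bipartition \<Rightarrow> bipartition option" where
  "ftilde e c i nu = (if \<exists>g. good_addable e c i nu g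
     then Some (add_node nu (THE g. good_addable e c i nu g)) else None)"

definition adjacent :: "nat \<times> nat \<Rightarrow> nat \<times> nat \<Rightarrow> bool" where
  "adjacent x y \<longleftrightarrow> (case x of (a, b) \<Rightarrow> case y of (a', b') \<Rightarrow>
     (a = a' \<and> (b' = b + 1 \<or> b = b' + 1)) \<or> (b = b' \<and> (a' = a + 1 \<or> a = a' + 1)))"

definition connected_nodes :: "(nat \<times> nat) set \<Rightarrow> bool" where
  "connected_nodes S \<longleftrightarrow> (\<forall>x\<in>S. \<forall>y\<in>S. (\<lambda>p q. p \<in> S \<and> q \<in> S \<and> adjacent p q)\<^sup>*\<^sup>* x y)"

definition remove_rim_hook :: "nat \<Rightarrow> nat list \<Rightarrow> nat list \<Rightarrow> bool" where
  "remove_rim_hook e lam mu \<longleftrightarrow> is_partition mu \<and> dg mu \<subseteq> dg lam \<and>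
     card (dg lam - dg mu) = e \<and> connected_nodes (dg lam - dg mu) \<and>
     \<not> (\<exists>a b. {(a, b), (a + 1, b), (a, b + 1), (a + 1, b + 1)} \<subseteq> dg lam - dg mu)"

definition is_ecore_of :: "nat \<Rightarrow> nat list \<Rightarrow> nat list \<Rightarrow> bool" where
  "is_ecore_of e lam kappa \<longleftrightarrow> (remove_rim_hook e)\<^sup>*\<^sup>* lam kappa \<and>
     \<not> (\<exists>mu. remove_rim_hook e kappa mu)"

definition ecore :: "nat \<Rightarrow> nat list \<Rightarrow> nat list" where
  "ecore e lam = (THE kappa. is_ecore_of e lam kappa)"

text \<open>The beta-set of lam of size m (m \<ge> length lam).\<close>
definition beta :: "nat \<Rightarrow> nat list \<Rightarrow> nat set" where
  "beta m lam = {part lam i + m - i | i. 1 \<le> i \<and> i \<le> m}"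

definition pi_beta :: "nat set \<Rightarrow> nat list" where
  "pi_beta X = (THE lam. is_partition lam \<and> length lam \<le> card X \<and> beta (card X) lam = X)"

text \<open>A beta-set of odd size: size length lam or length lam + 1.\<close>
definition odd_size :: "nat list \<Rightarrow> nat" where
  "odd_size lam = (if odd (length lam) then length lam else Suc (length lam))"

definition quot2 :: "nat list \<Rightarrow> nat list \<times> nat list" where
  "quot2 lam = (let B = beta (odd_size lam) lam in
     (pi_beta {x div 2 | x. x \<in> B \<and> even x}, pi_beta {(x - 1) div 2 | x. x \<in> B \<and> odd x}))"

definition barquot2 :: "nat \<Rightarrow> nat list \<Rightarrow> nat list \<times> nat list" where
  "barquot2 t lam = (if even t then quot2 lam else prod.swap (quot2 lam))"

definition staircase :: "nat \<Rightarrow> nat list" where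
  "staircase t = rev [1..<Suc t]"

definition Phi :: "nat \<Rightarrow> bipartition \<Rightarrow> nat list" where
  "Phi t nu = (THE lam. is_partition lam \<and> ecore 2 lam = staircase t \<and> barquot2 t lam = nu)"

definition charge :: "nat \<Rightarrow> nat \<Rightarrow> int \<times> int" where
  "charge e t = (int t + (1 - int e) div 2, 0)"

end

(*
  A partition of length at most m is determined by its m-element beta-set, and removing a rim
  e-hook moves one bead of the beta-set from x to x - e. Hence the e-core of a partition is
  determined by the numbers of beads on the runners, i.e. in the residue classes mod e.

  The beta-set of Phi t nu interleaves beta-sets of the two components of nu on the even and the
  odd positions. Adding an addable node to nu moves one bead of a component one step up, hence one
  bead of the beta-set of Phi t nu from some z to z + 2, and for the charge (t + (1 - e)/2, 0)
  this z is congruent to 2 * content + D mod e, with D depending only on t and the size of the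
  beta-set. Nodes of residues j1 and j2 therefore move beads off the runners 2 j1 + D and 2 j2 + D,
  which are distinct as e is odd; as e >= 3 the move z -> z + 2 always changes the runner, so the
  runner counts, and with them the e-cores, differ.
*)
theory Submission
  imports Defs
begin

section \<open>Partitions as antitone sequences\<close>

lemma part_zero: "a = 0 \<or> length lam < a \<Longrightarrow> part lam a = 0"
  by (auto simp: part_def)

lemma dg_part: "dg lam = {(a, b). 1 \<le> a \<and> 1 \<le> b \<and> b \<le> part lam a}"
  by (auto simp: dg_def part_def split: if_splits)

lemma part_antimono:
  assumes "is_partition lam" "1 \<le> a" "a \<le> a'"
  shows "part lam a' \<le> part lam a"
proof (cases "a' \<le> length lam")
  case True
  show ?thesis
  proof (cases "a = a'")
    case False
    hence "a - 1 < a' - 1" using assms by auto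
    hence "lam ! (a - 1) \<ge> lam ! (a' - 1)"
      using assms(1) True by (auto simp: is_partition_def intro: sorted_wrt_nth_less[where P="(\<ge>)", simplified])
    thus ?thesis using True assms by (auto simp: part_def)
  qed simp
qed (auto simp: part_def)

lemma part_pos_iff:
  assumes "is_partition lam"
  shows "0 < part lam a \<longleftrightarrow> 1 \<le> a \<and> a \<le> length lam"
proof -
  have "lam ! (a - 1) \<noteq> 0" if "1 \<le> a" "a \<le> length lam"
  proof -
    have "lam ! (a - 1) \<in> set lam" using that by (intro nth_mem) simp
    thus ?thesis using assms unfolding is_partition_def by metis
  qed
  thus ?thesis by (auto simp: part_def)
qed

lemma partition_eqI:
  assumes "is_partition l1" "is_partition l2" "\<And>a. 1 \<le> a \<Longrightarrow> part l1 a = part l2 a"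
  shows "l1 = l2"
proof -
  have len: "length l1 = length l2"
  proof (rule ccontr)
    assume "length l1 \<noteq> length l2"
    then consider "length l1 < length l2" | "length l2 < length l1" by linarith
    thus False
    proof cases
      case 1
      hence "0 < part l2 (length l2)" "part l1 (length l2) = 0"
        using part_pos_iff[OF assms(2)] part_zero by auto
      thus ?thesis using assms(3)[of "length l2"] 1 by simp
    next
      case 2
      hence "0 < part l1 (length l1)" "part l2 (length l1) = 0"
        using part_pos_iff[OF assms(1)] part_zero by auto
      thus ?thesis using assms(3)[of "length l1"] 2 by simp
    qed
  qed
  show ?thesis
  proof (rule nth_equalityI[OF len])
    fix i assume "i < length l1"
    thus "l1 ! i = l2 ! i" using assms(3)[of "Suc i"] len by (simp add: part_def)
  qed
qed

lemma partition_of_antimono: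
  fixes f :: "nat \<Rightarrow> nat"
  assumes anti: "\<And>a a'. 1 \<le> a \<Longrightarrow> a \<le> a' \<Longrightarrow> f a' \<le> f a"
    and fin: "\<And>a. n < a \<Longrightarrow> f a = 0"
  shows "\<exists>lam. is_partition lam \<and> length lam \<le> n \<and> (\<forall>a. 1 \<le> a \<longrightarrow> part lam a = f a)"
proof -
  define K where "K = Max ({0} \<union> {a \<in> {1..n}. 0 < f a})"
  have finK: "finite ({0} \<union> {a \<in> {1..n}. 0 < f a})" by auto
  have Kn: "K \<le> n" unfolding K_def using finK by (auto intro!: Max.boundedI)
  have pos: "1 \<le> a \<Longrightarrow> a \<le> K \<Longrightarrow> 0 < f a" for a
  proof -
    assume a: "1 \<le> a" "a \<le> K"
    hence "K \<in> {a \<in> {1..n}. 0 < f a}"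
      using Max_in[OF finK] unfolding K_def by auto
    hence "0 < f K" by auto
    thus ?thesis using anti[OF a] by linarith
  qed
  have zero: "K < a \<Longrightarrow> f a = 0" for a
  proof (rule ccontr)
    assume "K < a" "f a \<noteq> 0"
    moreover hence "a \<le> n" using fin by (metis not_le)
    ultimately have "a \<in> {a \<in> {1..n}. 0 < f a}" by auto
    hence "a \<le> K" unfolding K_def using finK by auto
    thus False using \<open>K < a\<close> by simp
  qed
  define lam where "lam = map (\<lambda>i. f (Suc i)) [0..<K]"
  have pl: "1 \<le> a \<Longrightarrow> part lam a = f a" for a
    using zero[of a] by (auto simp: part_def lam_def)
  have "sorted_wrt (\<ge>) lam"
    unfolding sorted_wrt_iff_nth_less lam_def by (auto intro!: anti)
  moreover have "0 \<notin> set lam"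
  proof -
    { fix i assume "i < K" hence "0 < f (Suc i)" using pos[of "Suc i"] by simp }
    thus ?thesis unfolding lam_def by fastforce
  qed
  ultimately show ?thesis using pl Kn by (auto simp: is_partition_def lam_def)
qed

section \<open>Beta-sets\<close>

definition bead :: "nat \<Rightarrow> nat list \<Rightarrow> nat \<Rightarrow> nat" where
  "bead m lam a = part lam a + m - a"

lemma beta_eq_image_bead: "beta m lam = bead m lam ` {1..m}"
  by (auto simp: beta_def bead_def)

lemma strict_antimono_on_atLeastAtMostI:
  fixes q :: "nat \<Rightarrow> nat"
  assumes "\<And>a. 1 \<le> a \<Longrightarrow> a < m \<Longrightarrow> q (Suc a) < q a"
  shows "strict_antimono_on {1..m} q"
proof (rule monotone_onI)
  fix a a' assume "a \<in> {1..m}" "a' \<in> {1..m}" "a < a'"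
  hence "Suc a \<le> a'" "a' \<le> m" "1 \<le> a" by auto
  from this(1,2) show "q a' < q a"
  proof (induction a' rule: dec_induct)
    case base
    show ?case using assms[of a] \<open>1 \<le> a\<close> base by simp
  next
    case (step n)
    have "q (Suc n) < q n" using assms[of n] \<open>1 \<le> a\<close> step by simp
    also have "q n < q a" using step by simp
    finally show ?case .
  qed
qed

lemma strict_antimono_gap:
  fixes p :: "nat \<Rightarrow> nat"
  assumes "strict_antimono_on {1..m} p" "1 \<le> a" "a \<le> a'" "a' \<le> m"
  shows "p a' + (a' - a) \<le> p a"
  using assms(3,4)
proof (induction a' rule: dec_induct)
  case (step k)
  have "p (Suc k) < p k" using monotone_onD[OF assms(1), of k "Suc k"] assms(2) step by auto
  thus ?case using step by auto
qed simp

lemma strict_antimono_lower: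
  fixes p :: "nat \<Rightarrow> nat"
  assumes "strict_antimono_on {1..m} p" "1 \<le> a" "a \<le> m"
  shows "m - a \<le> p a"
  using strict_antimono_gap[OF assms order_refl] by simp

lemma strict_antimono_on_image_eq:
  fixes p q :: "nat \<Rightarrow> nat"
  assumes "strict_antimono_on {1..m} p" "strict_antimono_on {1..m} q"
    and "p ` {1..m} = q ` {1..m}" "a \<in> {1..m}"
  shows "p a = q a"
proof -
  have sorted: "sorted_wrt (<) (map f (rev [1..<Suc m]))"
    if "strict_antimono_on {1..m} f" for f :: "nat \<Rightarrow> nat"
    using that unfolding sorted_wrt_map sorted_wrt_rev
    by (intro sorted_wrt_mono_rel[OF _ sorted_wrt_upt]) (auto intro: monotone_onD[OF that])
  have set_eq: "set (rev [1..<Suc m]) = {1..m}" by auto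
  have "map q (rev [1..<Suc m]) = map p (rev [1..<Suc m])"
    by (intro strict_sorted_equal sorted assms(1,2)) (simp only: set_map set_eq assms(3))
  hence "\<forall>x\<in>{1..m}. q x = p x" unfolding map_eq_conv set_eq .
  thus ?thesis using assms(4) by simp
qed

lemma bead_strict_antimono:
  "is_partition lam \<Longrightarrow> strict_antimono_on {1..m} (bead m lam)"
proof (rule monotone_onI)
  fix a a' assume "is_partition lam" "a \<in> {1..m}" "a' \<in> {1..m}" "a < a'"
  moreover hence "part lam a' \<le> part lam a" using part_antimono by simp
  ultimately show "bead m lam a' < bead m lam a" by (simp add: bead_def)
qed

lemma inj_on_bead: "is_partition lam \<Longrightarrow> inj_on (bead m lam) {1..m}"
  using bead_strict_antimono strict_antimono_iff_antimono by blast

lemma finite_beta: "finite (beta m lam)"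
  by (simp add: beta_eq_image_bead)

lemma card_beta: "is_partition lam \<Longrightarrow> card (beta m lam) = m"
  using card_image[OF inj_on_bead] by (simp add: beta_eq_image_bead)

lemma beta_inj:
  assumes "is_partition l1" "is_partition l2" "length l1 \<le> m" "length l2 \<le> m"
    and "beta m l1 = beta m l2"
  shows "l1 = l2"
proof (rule partition_eqI[OF assms(1,2)])
  fix a :: nat assume "1 \<le> a"
  show "part l1 a = part l2 a"
  proof (cases "a \<le> m")
    case True
    have "bead m l1 a = bead m l2 a"
      using strict_antimono_on_image_eq[OF bead_strict_antimono[OF assms(1)]
          bead_strict_antimono[OF assms(2)]] assms(5) \<open>1 \<le> a\<close> True
      by (simp add: beta_eq_image_bead)
    thus ?thesis using True by (simp add: bead_def)
  qed (use assms in \<open>simp add: part_zero\<close>)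
qed

lemma strict_antimono_beads:
  fixes q :: "nat \<Rightarrow> nat"
  assumes "strict_antimono_on {1..m} q"
  obtains lam where "is_partition lam" "length lam \<le> m" "\<And>a. a \<in> {1..m} \<Longrightarrow> bead m lam a = q a"
proof -
  define f where "f a = (if 1 \<le> a \<and> a \<le> m then q a - (m - a) else 0)" for a
  have "f a' \<le> f a" if "1 \<le> a" "a \<le> a'" for a a'
  proof (cases "a' \<le> m")
    case True
    thus ?thesis using strict_antimono_gap[OF assms that True] strict_antimono_lower[OF assms _ True] that
      by (simp add: f_def)
  qed (simp add: f_def)
  then obtain lam where lam: "is_partition lam" "length lam \<le> m" "\<And>a. 1 \<le> a \<Longrightarrow> part lam a = f a"
    using partition_of_antimono[of f m] by (auto simp: f_def)
  have "bead m lam a = q a" if "a \<in> {1..m}" for a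
  proof -
    have "m - a \<le> q a" "1 \<le> a" "a \<le> m" using strict_antimono_lower[OF assms] that by auto
    thus ?thesis using lam(3)[of a] by (simp add: bead_def f_def)
  qed
  thus ?thesis by (rule that[OF lam(1,2)])
qed

lemma beta_surj:
  assumes "finite X"
  obtains lam where "is_partition lam" "length lam \<le> card X" "beta (card X) lam = X"
proof -
  define m where "m = card X"
  define xs where "xs = sorted_list_of_set X"
  have xs: "sorted_wrt (<) xs" "set xs = X" "length xs = m"
    using assms by (auto simp: xs_def m_def strict_sorted_list_of_set)
  define q where "q a = xs ! (m - a)" for a
  have "strict_antimono_on {1..m} q"
    by (intro monotone_onI) (auto simp: q_def xs(3) intro!: sorted_wrt_nth_less[OF xs(1)])
  then obtain lam where lam: "is_partition lam" "length lam \<le> m" "\<And>a. a \<in> {1..m} \<Longrightarrow> bead m lam a = q a"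
    by (rule strict_antimono_beads) blast
  have "q ` {1..m} = X"
  proof
    show "q ` {1..m} \<subseteq> X" using xs by (auto simp: q_def)
    show "X \<subseteq> q ` {1..m}"
    proof
      fix x assume "x \<in> X"
      then obtain i where "i < m" "x = xs ! i" using xs by (auto simp: in_set_conv_nth)
      hence "x = q (m - i)" "m - i \<in> {1..m}" by (auto simp: q_def)
      thus "x \<in> q ` {1..m}" by (rule image_eqI)
    qed
  qed
  hence "beta m lam = X" using lam(3) by (simp add: beta_eq_image_bead)
  thus ?thesis using that lam unfolding m_def by blast
qed

lemma pi_beta:
  assumes "finite X"
  shows "is_partition (pi_beta X)" "length (pi_beta X) \<le> card X" "beta (card X) (pi_beta X) = X"
proof -
  obtain lam where lam: "is_partition lam" "length lam \<le> card X" "beta (card X) lam = X"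
    using beta_surj[OF assms] .
  have "\<exists>!lam. is_partition lam \<and> length lam \<le> card X \<and> beta (card X) lam = X"
  proof (rule ex1I)
    show "is_partition lam \<and> length lam \<le> card X \<and> beta (card X) lam = X" using lam by simp
    fix l assume "is_partition l \<and> length l \<le> card X \<and> beta (card X) l = X"
    thus "l = lam" using beta_inj[of l lam "card X"] lam by simp
  qed
  hence "is_partition (pi_beta X) \<and> length (pi_beta X) \<le> card X \<and> beta (card X) (pi_beta X) = X"
    unfolding pi_beta_def by (rule theI')
  thus "is_partition (pi_beta X)" "length (pi_beta X) \<le> card X" "beta (card X) (pi_beta X) = X"
    by auto
qed

lemma pi_beta_beta:
  assumes "is_partition lam" "length lam \<le> m"
  shows "pi_beta (beta m lam) = lam"
proof (rule beta_inj)
  show "beta m (pi_beta (beta m lam)) = beta m lam"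
    using pi_beta(3)[OF finite_beta, of m lam] card_beta[OF assms(1)] by simp
qed (use pi_beta[OF finite_beta, of m lam] card_beta[OF assms(1)] assms in auto)

lemma beta_Suc:
  assumes "length lam \<le> m"
  shows "beta (Suc m) lam = insert 0 (Suc ` beta m lam)"
proof -
  have "{1..Suc m} = insert (Suc m) {1..m}" by auto
  moreover have "bead (Suc m) lam (Suc m) = 0" using assms by (simp add: bead_def part_zero)
  moreover have "bead (Suc m) lam ` {1..m} = Suc ` bead m lam ` {1..m}"
    unfolding image_image by (rule image_cong) (auto simp: bead_def)
  ultimately show ?thesis by (simp add: beta_eq_image_bead)
qed

lemma pi_beta_insert_0_Suc:
  assumes "finite X"
  shows "pi_beta (insert 0 (Suc ` X)) = pi_beta X"
proof -
  have "beta (Suc (card X)) (pi_beta X) = insert 0 (Suc ` X)"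
    using beta_Suc[OF pi_beta(2)[OF assms]] pi_beta(3)[OF assms] by simp
  thus ?thesis using pi_beta_beta[of "pi_beta X" "Suc (card X)"] pi_beta(1,2)[OF assms] by simp
qed


section \<open>Rim hooks as bead moves\<close>

definition move_bead :: "nat set \<Rightarrow> nat \<Rightarrow> nat \<Rightarrow> nat set" where
  "move_bead X x y = insert y (X - {x})"

lemma dg_subset_part_le:
  assumes "is_partition mu" "dg mu \<subseteq> dg lam" "1 \<le> a"
  shows "part mu a \<le> part lam a"
proof (rule ccontr)
  assume "\<not> part mu a \<le> part lam a"
  hence "(a, part mu a) \<in> dg mu" "(a, part mu a) \<notin> dg lam" using assms(3) by (auto simp: dg_part)
  thus False using assms(2) by blast
qed

lemma dg_subset_length_le:
  assumes "is_partition mu" "dg mu \<subseteq> dg lam"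
  shows "length mu \<le> length lam"
proof (rule ccontr)
  assume n: "\<not> length mu \<le> length lam"
  hence "0 < part mu (length mu)" using part_pos_iff[OF assms(1)] by auto
  moreover have "part lam (length mu) = 0" using n by (simp add: part_zero)
  ultimately show False using dg_subset_part_le[OF assms, of "length mu"] n by auto
qed

lemma dg_inj:
  assumes "is_partition l1" "is_partition l2" "dg l1 = dg l2"
  shows "l1 = l2"
  using assms dg_subset_part_le[OF assms(1), of l2] dg_subset_part_le[OF assms(2), of l1]
  by (intro partition_eqI) (auto intro: antisym)

lemma finite_dg: "finite (dg lam)"
proof (rule finite_subset)
  show "dg lam \<subseteq> {..length lam} \<times> {..sum_list lam}"
  proof
    fix x assume "x \<in> dg lam"
    then obtain a b where x: "x = (a, b)" "1 \<le> a" "a \<le> length lam" "b \<le> lam ! (a - 1)"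
      unfolding dg_def by auto
    have "lam ! (a - 1) \<le> sum_list lam" using x by (intro elem_le_sum_list) simp
    thus "x \<in> {..length lam} \<times> {..sum_list lam}" using x by auto
  qed
qed simp

lemma dg_diff: "dg lam - dg mu = {(a, b). 1 \<le> a \<and> part mu a < b \<and> b \<le> part lam a}"
  by (auto simp: dg_part)

lemma card_dg_diff:
  assumes "length lam \<le> m"
  shows "card (dg lam - dg mu) = (\<Sum>a\<in>{1..m}. part lam a - part mu a)"
proof -
  have "part lam a = 0" if "m < a" for a using assms that by (simp add: part_zero)
  hence "dg lam - dg mu = (SIGMA a:{1..m}. {part mu a<..part lam a})"
    unfolding dg_diff by (force simp: not_le[symmetric])
  thus ?thesis by simp
qed

lemma sum_beta:
  assumes "is_partition lam" "is_partition mu" "length lam \<le> m"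
    and "\<And>a. 1 \<le> a \<Longrightarrow> part mu a \<le> part lam a"
  shows "\<Sum>(beta m lam) = \<Sum>(beta m mu) + card (dg lam - dg mu)"
proof -
  have sum_beads: "\<Sum>(beta m l) = (\<Sum>a\<in>{1..m}. bead m l a)" if "is_partition l" for l
    unfolding beta_eq_image_bead by (rule sum.reindex_cong[OF inj_on_bead[OF that]]) auto
  have "(\<Sum>a\<in>{1..m}. bead m lam a) = (\<Sum>a\<in>{1..m}. bead m mu a + (part lam a - part mu a))"
    using assms(4) by (intro sum.cong) (auto simp: bead_def)
  thus ?thesis using sum_beads[OF assms(1)] sum_beads[OF assms(2)] card_dg_diff[OF assms(3)]
    by (simp add: sum.distrib)
qed

lemma image_shift_segment:
  assumes inj: "inj_on p {1..m}" and a: "1 \<le> a1" "a1 \<le> a2" "a2 \<le> m"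
    and out: "\<And>a. 1 \<le> a \<Longrightarrow> a \<le> m \<Longrightarrow> a < a1 \<or> a2 < a \<Longrightarrow> q a = p a"
    and shift: "\<And>a. a1 \<le> a \<Longrightarrow> a < a2 \<Longrightarrow> q a = p (Suc a)"
  shows "q ` {1..m} = move_bead (p ` {1..m}) (p a1) (q a2)"
  unfolding move_bead_def
proof (rule set_eqI, rule iffI)
  fix y assume "y \<in> q ` {1..m}"
  then obtain a where aa: "a \<in> {1..m}" "y = q a" by auto
  consider "a = a2" | "a1 \<le> a \<and> a < a2" | "a < a1 \<or> a2 < a" by linarith
  thus "y \<in> insert (q a2) (p ` {1..m} - {p a1})"
  proof cases
    case 2
    hence "y = p (Suc a)" "Suc a \<in> {1..m}" "Suc a \<noteq> a1" using aa shift a by auto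
    moreover hence "p (Suc a) \<noteq> p a1" using inj a inj_onD[OF inj, of "Suc a" a1] by auto
    ultimately show ?thesis by auto
  next
    case 3
    hence "y = p a" "a \<noteq> a1" using aa out a by auto
    moreover hence "p a \<noteq> p a1" using inj a aa inj_onD[OF inj, of a a1] by auto
    ultimately show ?thesis using aa by auto
  qed (use aa in auto)
next
  fix y assume y: "y \<in> insert (q a2) (p ` {1..m} - {p a1})"
  show "y \<in> q ` {1..m}"
  proof (cases "y = q a2")
    case False
    then obtain c where c: "c \<in> {1..m}" "y = p c" "c \<noteq> a1" using y by force
    consider "c < a1 \<or> a2 < c" | "a1 < c \<and> c \<le> a2" using c by linarith
    thus ?thesis
    proof cases
      case 1
      hence "q c = y" using out[of c] c by auto
      thus ?thesis using c(1) by blast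
    next
      case 2
      hence "q (c - 1) = p c" "c - 1 \<in> {1..m}" using shift[of "c - 1"] a c by auto
      thus ?thesis using c by force
    qed
  qed (use a in auto)
qed

text \<open>The skew diagram \<open>lam/mu\<close> is a rim strip occupying exactly the rows \<open>a1..a2\<close>:
  consecutive rows of the strip share exactly one column.\<close>
definition skew_rim :: "nat list \<Rightarrow> nat list \<Rightarrow> nat \<Rightarrow> nat \<Rightarrow> bool" where
  "skew_rim lam mu a1 a2 \<longleftrightarrow> 1 \<le> a1 \<and> a1 \<le> a2 \<and>
     (\<forall>a. 1 \<le> a \<longrightarrow> a < a1 \<or> a2 < a \<longrightarrow> part mu a = part lam a) \<and>
     (\<forall>a. a1 \<le> a \<longrightarrow> a \<le> a2 \<longrightarrow> part mu a < part lam a) \<and>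
     (\<forall>a. a1 \<le> a \<longrightarrow> a < a2 \<longrightarrow> part mu a + 1 = part lam (Suc a))"

lemma skew_rimD:
  assumes "skew_rim lam mu a1 a2"
  shows "1 \<le> a1" "a1 \<le> a2"
    and "\<And>a. 1 \<le> a \<Longrightarrow> a < a1 \<or> a2 < a \<Longrightarrow> part mu a = part lam a"
    and "\<And>a. a1 \<le> a \<Longrightarrow> a \<le> a2 \<Longrightarrow> part mu a < part lam a"
    and "\<And>a. a1 \<le> a \<Longrightarrow> a < a2 \<Longrightarrow> part mu a + 1 = part lam (Suc a)"
  using assms unfolding skew_rim_def by blast+

lemma skew_rim_beta:
  assumes "is_partition lam" "length lam \<le> m" and rim: "skew_rim lam mu a1 a2"
  shows "a2 \<le> m" "beta m mu = move_bead (beta m lam) (bead m lam a1) (bead m mu a2)"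
proof -
  have "0 < part lam a2" using skew_rimD(4)[OF rim, of a2] skew_rimD(2)[OF rim] by simp
  thus "a2 \<le> m" using part_pos_iff[OF assms(1)] assms(2) by simp
  have "bead m mu ` {1..m} = move_bead (bead m lam ` {1..m}) (bead m lam a1) (bead m mu a2)"
  proof (rule image_shift_segment[OF inj_on_bead[OF assms(1)]])
    show "1 \<le> a1" "a1 \<le> a2" using skew_rimD(1,2)[OF rim] .
  next
    fix a assume "1 \<le> a" "a < a1 \<or> a2 < a"
    thus "bead m mu a = bead m lam a" using skew_rimD(3)[OF rim] by (simp add: bead_def)
  next
    fix a assume "a1 \<le> a" "a < a2"
    thus "bead m mu a = bead m lam (Suc a)"
      using skew_rimD(5)[OF rim, of a] \<open>a2 \<le> m\<close> by (simp add: bead_def)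
  qed fact
  thus "beta m mu = move_bead (beta m lam) (bead m lam a1) (bead m mu a2)"
    by (simp add: beta_eq_image_bead)
qed

definition adjacent_in :: "(nat \<times> nat) set \<Rightarrow> nat \<times> nat \<Rightarrow> nat \<times> nat \<Rightarrow> bool" where
  "adjacent_in S p q \<longleftrightarrow> p \<in> S \<and> q \<in> S \<and> adjacent p q"

lemma connected_nodes_iff: "connected_nodes S \<longleftrightarrow> (\<forall>x\<in>S. \<forall>y\<in>S. (adjacent_in S)\<^sup>*\<^sup>* x y)"
  unfolding connected_nodes_def adjacent_in_def[abs_def] by simp

lemma symp_adjacent_in: "symp (adjacent_in S)"
  unfolding adjacent_in_def adjacent_def by (auto intro: sympI)

lemma adjacent_in_path_row_le:
  assumes gap: "\<And>b. (Suc a, b) \<in> S \<Longrightarrow> (a, b) \<notin> S"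
    and path: "(adjacent_in S)\<^sup>*\<^sup>* u v" and "fst u \<le> a"
  shows "fst v \<le> a"
  using path
proof (induction rule: rtranclp_induct)
  case (step y z)
  obtain ya yb za zb where yz: "y = (ya, yb)" "z = (za, zb)" by fastforce
  show ?case
  proof (rule ccontr)
    assume "\<not> fst z \<le> a"
    hence "za = Suc a" "zb = yb" "ya = a"
      using step yz unfolding adjacent_in_def adjacent_def by auto
    thus False using step(2) gap yz unfolding adjacent_in_def by auto
  qed
qed (use assms in simp)

lemma skew_no_square_overlap_le:
  assumes lam: "is_partition lam" and mu: "is_partition mu" and "1 \<le> a"
    and no_square: "\<not> (\<exists>a b. {(a, b), (a + 1, b), (a, b + 1), (a + 1, b + 1)} \<subseteq> dg lam - dg mu)"
  shows "part lam (Suc a) \<le> part mu a + 1"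
proof (rule ccontr)
  let ?b = "part mu a + 1"
  assume "\<not> ?thesis"
  moreover have "part mu (Suc a) \<le> part mu a" "part lam (Suc a) \<le> part lam a"
    using part_antimono[OF mu \<open>1 \<le> a\<close>] part_antimono[OF lam \<open>1 \<le> a\<close>] by simp_all
  ultimately have "{(a, ?b), (a + 1, ?b), (a, ?b + 1), (a + 1, ?b + 1)} \<subseteq> dg lam - dg mu"
    using \<open>1 \<le> a\<close> unfolding dg_diff by auto
  thus False using no_square by blast
qed

lemma skew_connected_overlap_gt:
  assumes lam: "is_partition lam" and con: "connected_nodes (dg lam - dg mu)"
    and nodes: "(a1, b1) \<in> dg lam - dg mu" "(a2, b2) \<in> dg lam - dg mu" and "a1 \<le> a" "a < a2"
  shows "part mu a < part lam (Suc a)"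
proof (rule ccontr)
  let ?S = "dg lam - dg mu"
  assume "\<not> ?thesis"
  hence "(a, b) \<notin> ?S" if "(Suc a, b) \<in> ?S" for b
    using that part_antimono[OF lam, of a "Suc a"] unfolding dg_diff by auto
  moreover have "(adjacent_in ?S)\<^sup>*\<^sup>* (a1, b1) (a2, b2)"
    using con nodes unfolding connected_nodes_iff by blast
  ultimately have "a2 \<le> a" using adjacent_in_path_row_le[of a ?S] \<open>a1 \<le> a\<close> by fastforce
  thus False using \<open>a < a2\<close> by simp
qed

lemma remove_rim_hook_skew_rim:
  assumes lam: "is_partition lam" and r: "remove_rim_hook e lam mu" and e: "0 < e"
  obtains a1 a2 where "skew_rim lam mu a1 a2"
proof -
  have mu: "is_partition mu" and sub: "dg mu \<subseteq> dg lam" and card_S: "card (dg lam - dg mu) = e"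
    and con: "connected_nodes (dg lam - dg mu)"
    and no_square: "\<not> (\<exists>a b. {(a, b), (a + 1, b), (a, b + 1), (a + 1, b + 1)} \<subseteq> dg lam - dg mu)"
    using r unfolding remove_rim_hook_def by auto
  define R where "R = {a. 1 \<le> a \<and> part mu a < part lam a}"
  have node: "(a, part lam a) \<in> dg lam - dg mu" if "a \<in> R" for a using that unfolding R_def dg_diff by auto
  have "R \<subseteq> {1..length lam}"
  proof
    fix a assume "a \<in> R"
    hence "0 < part lam a" unfolding R_def by auto
    thus "a \<in> {1..length lam}" using part_pos_iff[OF lam] by simp
  qed
  hence finR: "finite R" using finite_subset by blast
  have "dg lam - dg mu \<noteq> {}" using card_S e card_gt_0_iff by blast
  hence "R \<noteq> {}" unfolding R_def dg_diff by auto
  define a1 where "a1 = Min R"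
  define a2 where "a2 = Max R"
  have a1R: "a1 \<in> R" and a2R: "a2 \<in> R" unfolding a1_def a2_def using finR \<open>R \<noteq> {}\<close> by auto
  have outside: "part mu a = part lam a" if "1 \<le> a" "a < a1 \<or> a2 < a" for a
  proof -
    have "a \<notin> R" using that finR unfolding a1_def a2_def by (auto dest: Min_le Max_ge)
    thus ?thesis using dg_subset_part_le[OF mu sub \<open>1 \<le> a\<close>] \<open>1 \<le> a\<close> unfolding R_def by auto
  qed
  have overlap_gt: "part mu a < part lam (Suc a)" if "a1 \<le> a" "a < a2" for a
    using skew_connected_overlap_gt[OF lam con node[OF a1R] node[OF a2R] that] .
  have "skew_rim lam mu a1 a2"
    unfolding skew_rim_def
  proof (intro conjI allI impI)
    show "1 \<le> a1" "a1 \<le> a2" using a1R a2R finR unfolding a2_def R_def by auto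
    fix a
    show "part mu a = part lam a" if "1 \<le> a" "a < a1 \<or> a2 < a" using outside that .
    show "part mu a + 1 = part lam (Suc a)" if "a1 \<le> a" "a < a2"
      using skew_no_square_overlap_le[OF lam mu _ no_square, of a] overlap_gt[OF that] \<open>1 \<le> a1\<close> that
      by simp
    show "part mu a < part lam a" if "a1 \<le> a" "a \<le> a2"
    proof (cases "a = a2")
      case False
      hence "part mu a < part lam (Suc a)" using overlap_gt that by simp
      thus ?thesis using part_antimono[OF lam, of a "Suc a"] \<open>1 \<le> a1\<close> that by simp
    qed (use a2R R_def in simp)
  qed
  thus ?thesis by (rule that)
qed

lemma skew_rim_rows:
  assumes "skew_rim lam mu a1 a2" "(a, b) \<in> dg lam - dg mu"
  shows "a1 \<le> a" "a \<le> a2"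
  using assms(2) skew_rimD(3)[OF assms(1), of a] unfolding dg_diff by force+

lemma skew_rim_dg_subset:
  assumes "skew_rim lam mu a1 a2"
  shows "dg mu \<subseteq> dg lam"
proof -
  have "part mu a \<le> part lam a" if "1 \<le> a" for a
    using skew_rimD(3,4)[OF assms, of a] that by (cases "a1 \<le> a \<and> a \<le> a2") (auto intro: less_imp_le)
  thus ?thesis by (auto simp: dg_part intro: order.trans)
qed

lemma skew_rim_no_square:
  assumes "skew_rim lam mu a1 a2"
  shows "\<not> (\<exists>a b. {(a, b), (a + 1, b), (a, b + 1), (a + 1, b + 1)} \<subseteq> dg lam - dg mu)"
proof
  assume "\<exists>a b. {(a, b), (a + 1, b), (a, b + 1), (a + 1, b + 1)} \<subseteq> dg lam - dg mu"
  then obtain a b where ab: "(a, b) \<in> dg lam - dg mu" "(a + 1, b + 1) \<in> dg lam - dg mu" by auto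
  hence "part mu a + 1 = part lam (Suc a)"
    using skew_rim_rows[OF assms ab(1)] skew_rim_rows[OF assms ab(2)] skew_rimD(5)[OF assms] by simp
  thus False using ab unfolding dg_diff by auto
qed

lemma skew_rim_connected:
  assumes rim: "skew_rim lam mu a1 a2"
  shows "connected_nodes (dg lam - dg mu)"
proof -
  define S where "S = dg lam - dg mu"
  have S: "S = {(a, b). 1 \<le> a \<and> part mu a < b \<and> b \<le> part lam a}" unfolding S_def dg_diff ..
  note inside = skew_rimD(4)[OF rim] and overlap = skew_rimD(5)[OF rim]
  have along_row: "(adjacent_in S)\<^sup>*\<^sup>* (a, b) (a, part mu a + 1)" if "(a, b) \<in> S" for a b
  proof -
    have "(adjacent_in S)\<^sup>*\<^sup>* (a, part mu a + 1 + k) (a, part mu a + 1)"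
      if "(a, part mu a + 1 + k) \<in> S" for k
      using that
    proof (induction k)
      case (Suc k)
      hence "(a, part mu a + 1 + k) \<in> S" unfolding S by auto
      moreover hence "adjacent_in S (a, part mu a + 1 + Suc k) (a, part mu a + 1 + k)"
        using Suc.prems unfolding adjacent_in_def adjacent_def by auto
      ultimately show ?case using Suc.IH by (meson converse_rtranclp_into_rtranclp)
    qed simp
    moreover have "b = part mu a + 1 + (b - (part mu a + 1))" using that unfolding S by auto
    ultimately show ?thesis using that by metis
  qed
  \<comment> \<open>Every node reaches the first node \<open>z0\<close> of the bottom row: left along its row, then
    down through the column that each row shares with the next.\<close>
  define z0 where "z0 = (a2, part mu a2 + 1)"
  have down_rows: "(adjacent_in S)\<^sup>*\<^sup>* (a, part mu a + 1) z0" if "a1 \<le> a" "a \<le> a2" for a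
    using that
  proof (induction "a2 - a" arbitrary: a)
    case 0 thus ?case by (simp add: z0_def)
  next
    case (Suc k)
    hence a: "a < a2" by simp
    have "(a, part mu a + 1) \<in> S" "(Suc a, part lam (Suc a)) \<in> S"
      using inside[of a] inside[of "Suc a"] Suc a skew_rimD(1)[OF rim] unfolding S by auto
    moreover have "part mu a + 1 = part lam (Suc a)" using overlap Suc a by simp
    ultimately have "adjacent_in S (a, part mu a + 1) (Suc a, part lam (Suc a))"
      unfolding adjacent_in_def adjacent_def by auto
    moreover have "(adjacent_in S)\<^sup>*\<^sup>* (Suc a, part lam (Suc a)) (Suc a, part mu (Suc a) + 1)"
      using along_row \<open>(Suc a, part lam (Suc a)) \<in> S\<close> .
    moreover have "(adjacent_in S)\<^sup>*\<^sup>* (Suc a, part mu (Suc a) + 1) z0" using Suc a by auto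
    ultimately show ?case by (meson converse_rtranclp_into_rtranclp rtranclp_trans)
  qed
  have to_z0: "(adjacent_in S)\<^sup>*\<^sup>* u z0" if "u \<in> S" for u
  proof -
    obtain a b where u: "u = (a, b)" by fastforce
    hence "a1 \<le> a" "a \<le> a2" using skew_rim_rows[OF rim] that unfolding S_def by auto
    thus ?thesis using along_row[of a b] down_rows[of a] that u by (meson rtranclp_trans)
  qed
  show ?thesis
    unfolding connected_nodes_iff S_def[symmetric]
    using to_z0 sympD[OF symp_rtranclp[OF symp_adjacent_in] to_z0] by (meson rtranclp_trans)
qed

lemma skew_rim_remove_rim_hook:
  assumes "is_partition mu" "skew_rim lam mu a1 a2" "card (dg lam - dg mu) = e"
  shows "remove_rim_hook e lam mu"
  unfolding remove_rim_hook_def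
  using assms(1,3) skew_rim_dg_subset[OF assms(2)] skew_rim_connected[OF assms(2)]
    skew_rim_no_square[OF assms(2)] by simp

lemma sum_move_bead:
  assumes "finite X" "x \<in> X" "y \<notin> X - {x}"
  shows "\<Sum>(move_bead X x y) + x = \<Sum>X + y"
  using assms by (simp add: move_bead_def sum.remove)

lemma remove_rim_hook_partition:
  assumes "is_partition lam" "remove_rim_hook e lam mu"
  shows "is_partition mu" "length mu \<le> length lam"
  using assms dg_subset_length_le unfolding remove_rim_hook_def by blast+

lemma remove_rim_hook_beta:
  assumes lam: "is_partition lam" "length lam \<le> m" and r: "remove_rim_hook e lam mu" and e: "0 < e"
  obtains x where "x \<in> beta m lam" "e \<le> x" "x - e \<notin> beta m lam"
    "beta m mu = move_bead (beta m lam) x (x - e)"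
proof -
  obtain a1 a2 where rim: "skew_rim lam mu a1 a2" using remove_rim_hook_skew_rim[OF lam(1) r e] .
  have mu: "is_partition mu" using remove_rim_hook_partition(1)[OF lam(1) r] .
  define x where "x = bead m lam a1"
  define y where "y = bead m mu a2"
  have a12: "1 \<le> a1" "a1 \<le> a2" "a2 \<le> m" using skew_rimD(1,2)[OF rim] skew_rim_beta(1)[OF lam rim] by auto
  have beta_mu: "beta m mu = move_bead (beta m lam) x y"
    unfolding x_def y_def using skew_rim_beta(2)[OF lam rim] .
  have x: "x \<in> beta m lam" using a12 by (auto simp: x_def beta_eq_image_bead)
  have y: "y \<notin> beta m lam - {x}"
  proof
    assume "y \<in> beta m lam - {x}"
    hence "beta m mu = beta m lam - {x}" using beta_mu by (auto simp: move_bead_def)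
    thus False using card_beta[OF lam(1), of m] card_beta[OF mu, of m] x finite_beta a12
      by (simp add: card_Diff_singleton)
  qed
  have "\<Sum>(beta m lam) = \<Sum>(beta m mu) + e"
    using sum_beta[OF lam(1) mu lam(2)] r dg_subset_part_le[OF mu]
    unfolding remove_rim_hook_def by simp
  hence xy: "x = y + e" using sum_move_bead[OF finite_beta x y] beta_mu by simp
  hence "y \<notin> beta m lam" using y e by auto
  thus ?thesis using that x xy beta_mu by simp
qed

lemma strict_antimono_move_down:
  fixes p :: "nat \<Rightarrow> nat"
  assumes p: "strict_antimono_on {1..m} p" and a: "1 \<le> a1" "a1 \<le> a2" "a2 \<le> m"
    and y: "y < p a2" "\<And>a. a2 < a \<Longrightarrow> a \<le> m \<Longrightarrow> p a < y"
  shows "strict_antimono_on {1..m} (\<lambda>a. if a1 \<le> a \<and> a < a2 then p (Suc a) else if a = a2 then y else p a)"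
    (is "strict_antimono_on _ ?q")
proof (rule strict_antimono_on_atLeastAtMostI)
  have less: "p a' < p a" if "1 \<le> a" "a < a'" "a' \<le> m" for a a'
    using monotone_onD[OF p, of a a'] that by simp
  fix a assume "1 \<le> a" "a < m"
  consider "Suc a < a1" | "Suc a = a1" | "a1 \<le> a \<and> Suc a < a2" | "a1 \<le> a \<and> Suc a = a2" | "a = a2" | "a2 < a"
    by linarith
  thus "?q (Suc a) < ?q a"
  proof cases
    case 2
    have "p a1 < p a" using less[of a a1] 2 \<open>1 \<le> a\<close> a by simp
    moreover have "?q (Suc a) < p a1" using less[of a1 "Suc a1"] y(1) 2 a by (cases "a1 = a2") auto
    ultimately show ?thesis using 2 a by simp
  next
    case 4 thus ?thesis using y(1) by simp
  next
    case 5 thus ?thesis using y(2)[of "Suc a"] \<open>a < m\<close> by simp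
  qed (use less[of a "Suc a"] less[of "Suc a" "Suc (Suc a)"] \<open>1 \<le> a\<close> \<open>a < m\<close> a in auto)
qed

lemma beta_move_down:
  assumes lam: "is_partition lam" "length lam \<le> m"
    and x: "x \<in> beta m lam" "e \<le> x" "x - e \<notin> beta m lam" and e: "0 < e"
  obtains mu a1 a2 where "is_partition mu" "skew_rim lam mu a1 a2"
    "beta m mu = move_bead (beta m lam) x (x - e)"
proof -
  let ?p = "bead m lam"
  have less: "?p a' < ?p a" if "1 \<le> a" "a < a'" "a' \<le> m" for a a'
    using monotone_onD[OF bead_strict_antimono[OF lam(1), of m], of a a'] that by simp
  obtain a1 where a1: "1 \<le> a1" "a1 \<le> m" "?p a1 = x" using x(1) unfolding beta_eq_image_bead by auto
  define A where "A = {a \<in> {a1..m}. x - e < ?p a}"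
  have "a1 \<in> A" "finite A" unfolding A_def using a1 e x(2) by auto
  define a2 where "a2 = Max A"
  have "a2 \<in> A" unfolding a2_def using \<open>a1 \<in> A\<close> \<open>finite A\<close> by (intro Max_in) auto
  hence a12: "a1 \<le> a2" "a2 \<le> m" "x - e < ?p a2" unfolding A_def by auto
  have below: "?p a < x - e" if "a2 < a" "a \<le> m" for a
  proof -
    have "a \<notin> A"
    proof
      assume "a \<in> A"
      hence "a \<le> a2" unfolding a2_def using \<open>finite A\<close> by simp
      thus False using that by simp
    qed
    moreover have "?p a \<in> beta m lam" using that a1 a12 by (simp add: beta_eq_image_bead)
    hence "?p a \<noteq> x - e" using x(3) by auto
    ultimately show ?thesis using that a12 unfolding A_def by auto
  qed
  define q where "q a = (if a1 \<le> a \<and> a < a2 then ?p (Suc a) else if a = a2 then x - e else ?p a)" for a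
  have "strict_antimono_on {1..m} q"
    unfolding q_def using below
      strict_antimono_move_down[OF bead_strict_antimono[OF lam(1), of m] a1(1) a12(1,2,3)] by simp
  then obtain mu where mu: "is_partition mu" "length mu \<le> m" "\<And>a. a \<in> {1..m} \<Longrightarrow> bead m mu a = q a"
    by (rule strict_antimono_beads) blast
  have "skew_rim lam mu a1 a2"
    unfolding skew_rim_def
  proof (intro conjI allI impI)
    fix a
    show "part mu a = part lam a" if "1 \<le> a" "a < a1 \<or> a2 < a"
    proof (cases "a \<le> m")
      case True
      thus ?thesis using mu(3)[of a] that a12 by (auto simp: q_def bead_def)
    qed (use mu(2) lam(2) in \<open>simp add: part_zero\<close>)
    show "part mu a + 1 = part lam (Suc a)" if "a1 \<le> a" "a < a2"
      using mu(3)[of a] that a1 a12 by (auto simp: q_def bead_def)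
    show "part mu a < part lam a" if "a1 \<le> a" "a \<le> a2"
    proof -
      have "q a < ?p a" using less[of a "Suc a"] that a1 a12 by (auto simp: q_def)
      thus ?thesis using mu(3)[of a] that a1 a12 by (simp add: bead_def)
    qed
  qed (use a1 a12 in auto)
  moreover have "bead m mu a2 = x - e" using mu(3)[of a2] a1 a12 by (simp add: q_def)
  ultimately show ?thesis
    using that mu(1) skew_rim_beta(2)[OF lam] a1(3) by metis
qed

lemma beta_remove_rim_hook:
  assumes lam: "is_partition lam" "length lam \<le> m"
    and x: "x \<in> beta m lam" "e \<le> x" "x - e \<notin> beta m lam" and e: "0 < e"
  shows "\<exists>mu. remove_rim_hook e lam mu"
proof -
  obtain mu a1 a2 where mu: "is_partition mu" and rim: "skew_rim lam mu a1 a2"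
    and beta_mu: "beta m mu = move_bead (beta m lam) x (x - e)"
    using beta_move_down[OF assms] .
  have "\<Sum>(beta m lam) = \<Sum>(beta m mu) + card (dg lam - dg mu)"
    using sum_beta[OF lam(1) mu lam(2)] dg_subset_part_le[OF mu skew_rim_dg_subset[OF rim]] by simp
  moreover have "\<Sum>(beta m mu) + x = \<Sum>(beta m lam) + (x - e)"
    using sum_move_bead[OF finite_beta x(1)] x(3) beta_mu by simp
  ultimately have "card (dg lam - dg mu) = e" using x(2) by simp
  thus ?thesis using skew_rim_remove_rim_hook[OF mu rim] by blast
qed


section \<open>The e-core is determined by the runner counts\<close>

definition runner_count :: "nat \<Rightarrow> nat set \<Rightarrow> nat \<Rightarrow> nat" where
  "runner_count e X r = card {x \<in> X. x mod e = r}"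

definition flush :: "nat \<Rightarrow> nat set \<Rightarrow> bool" where
  "flush e X \<longleftrightarrow> (\<forall>x\<in>X. e \<le> x \<longrightarrow> x - e \<in> X)"

lemma runner_count_move_bead:
  assumes "finite X" "x \<in> X" "y \<notin> X"
  shows "runner_count e (move_bead X x y) r + of_bool (x mod e = r) =
    runner_count e X r + of_bool (y mod e = r)"
proof -
  let ?C = "{z \<in> X. z mod e = r}"
  have fin: "finite (?C - {x})" using assms(1) by simp
  have "{z \<in> move_bead X x y. z mod e = r} = (?C - {x}) \<union> (if y mod e = r then {y} else {})"
    by (auto simp: move_bead_def)
  moreover have "card (if y mod e = r then {y} else {}) = of_bool (y mod e = r)" by simp
  moreover have "(?C - {x}) \<inter> (if y mod e = r then {y} else {}) = {}" using assms(3) by auto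
  ultimately have "runner_count e (move_bead X x y) r = card (?C - {x}) + of_bool (y mod e = r)"
    unfolding runner_count_def using fin by (simp add: card_Un_disjoint)
  moreover have "card (?C - {x}) + of_bool (x mod e = r) = card ?C"
    using assms(1,2) card_Suc_Diff1[of ?C x] by (cases "x mod e = r") auto
  ultimately show ?thesis unfolding runner_count_def by linarith
qed

lemma remove_rim_hook_runner_count:
  assumes "is_partition lam" "length lam \<le> m" "remove_rim_hook e lam mu" "0 < e"
  shows "runner_count e (beta m mu) = runner_count e (beta m lam)"
proof
  fix r
  obtain x where x: "x \<in> beta m lam" "e \<le> x" "x - e \<notin> beta m lam"
    and beta_mu: "beta m mu = move_bead (beta m lam) x (x - e)"
    using remove_rim_hook_beta[OF assms] .
  have "(x - e) mod e = x mod e" using x(2) by (simp add: le_mod_geq)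
  thus "runner_count e (beta m mu) r = runner_count e (beta m lam) r"
    using runner_count_move_bead[OF finite_beta x(1,3), of e r] beta_mu by simp
qed

lemma remove_rim_hooks_runner_count:
  assumes "(remove_rim_hook e)\<^sup>*\<^sup>* lam kappa" "is_partition lam" "length lam \<le> m" "0 < e"
  shows "is_partition kappa \<and> length kappa \<le> m \<and>
    runner_count e (beta m kappa) = runner_count e (beta m lam)"
  using assms(1)
proof (induction rule: rtranclp_induct)
  case (step mu nu)
  thus ?case using remove_rim_hook_partition[of mu e nu] remove_rim_hook_runner_count[of mu m e nu] assms(4)
    by auto
qed (use assms in auto)

lemma no_rim_hook_flush:
  assumes "is_partition kappa" "length kappa \<le> m" "\<not> (\<exists>mu. remove_rim_hook e kappa mu)" "0 < e"
  shows "flush e (beta m kappa)"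
  unfolding flush_def
proof (intro ballI impI)
  fix x assume "x \<in> beta m kappa" "e \<le> x"
  thus "x - e \<in> beta m kappa" using beta_remove_rim_hook[OF assms(1,2) _ _ _ assms(4)] assms(3) by blast
qed

lemma flush_diff_mult:
  assumes "flush e X" "y \<in> X" "e * j \<le> y"
  shows "y - e * j \<in> X"
  using assms(3)
proof (induction j)
  case (Suc j)
  hence "y - e * j \<in> X" "e \<le> y - e * j" by simp_all
  hence "y - e * j - e \<in> X" using assms(1) unfolding flush_def by blast
  thus ?case by (simp add: diff_diff_add add.commute)
qed (simp add: assms(2))

lemma downward_closed_eq_lessThan:
  fixes K :: "nat set"
  assumes "finite K" "\<And>k k'. k \<in> K \<Longrightarrow> k' < k \<Longrightarrow> k' \<in> K"
  shows "K = {..<card K}"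
proof (rule card_subset_eq)
  show "K \<subseteq> {..<card K}"
  proof
    fix k assume "k \<in> K"
    hence "{..k} \<subseteq> K" using assms(2) by (auto simp: le_less)
    hence "card {..k} \<le> card K" using assms(1) by (intro card_mono)
    thus "k \<in> {..<card K}" by simp
  qed
qed simp_all

lemma flush_iff:
  assumes "finite X" "flush e X" "0 < e"
  shows "x \<in> X \<longleftrightarrow> x div e < runner_count e X (x mod e)"
proof -
  define r where "r = x mod e"
  define K where "K = {k. r + e * k \<in> X}"
  have decomp: "y = y mod e + e * (y div e)" for y by simp
  have "{y \<in> X. y mod e = r} = (\<lambda>k. r + e * k) ` K"
  proof (intro equalityI subsetI)
    fix y assume "y \<in> {y \<in> X. y mod e = r}"
    hence "y = r + e * (y div e)" "y div e \<in> K" using decomp[of y] unfolding K_def by auto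
    thus "y \<in> (\<lambda>k. r + e * k) ` K" by (rule image_eqI)
  next
    fix y assume "y \<in> (\<lambda>k. r + e * k) ` K"
    thus "y \<in> {y \<in> X. y mod e = r}" using assms(3) unfolding K_def r_def by auto
  qed
  moreover have inj: "inj_on (\<lambda>k. r + e * k) K" using assms(3) by (auto intro: inj_onI)
  moreover have "finite {y \<in> X. y mod e = r}" using assms(1) by simp
  ultimately have card_K: "runner_count e X r = card K" and "finite K"
    using finite_imageD[OF _ inj] by (auto simp: runner_count_def card_image)
  have "K = {..<card K}"
  proof (rule downward_closed_eq_lessThan[OF \<open>finite K\<close>])
    fix k k' assume "k \<in> K" "k' < k"
    moreover have "e * (k - k') \<le> r + e * k" by (simp add: diff_mult_distrib2)
    ultimately have "r + e * k - e * (k - k') \<in> X" using flush_diff_mult[OF assms(2)] unfolding K_def by simp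
    moreover have "r + e * k - e * (k - k') = r + e * k'" using \<open>k' < k\<close> by (simp add: diff_mult_distrib2)
    ultimately show "k' \<in> K" unfolding K_def by simp
  qed
  moreover have "x \<in> X \<longleftrightarrow> x div e \<in> K" using decomp[of x] unfolding K_def r_def by simp
  ultimately show ?thesis using card_K unfolding r_def by (metis lessThan_iff)
qed

lemma flush_eqI:
  assumes "finite X" "finite Y" "flush e X" "flush e Y" "0 < e"
    and "runner_count e X = runner_count e Y"
  shows "X = Y"
  using flush_iff[OF assms(1,3,5)] flush_iff[OF assms(2,4,5)] assms(6) by auto

lemma ex_core:
  assumes "is_partition lam" "0 < e"
  shows "\<exists>kappa. (remove_rim_hook e)\<^sup>*\<^sup>* lam kappa \<and> \<not> (\<exists>mu. remove_rim_hook e kappa mu)"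
  using assms(1)
proof (induction "card (dg lam)" arbitrary: lam rule: less_induct)
  case less
  show ?case
  proof (cases "\<exists>mu. remove_rim_hook e lam mu")
    case True
    then obtain mu where r: "remove_rim_hook e lam mu" by blast
    hence mu: "is_partition mu" "dg mu \<subseteq> dg lam" "card (dg lam - dg mu) = e"
      unfolding remove_rim_hook_def by auto
    have "card (dg lam - dg mu) = card (dg lam) - card (dg mu)"
      using mu(2) finite_dg by (simp add: card_Diff_subset finite_subset)
    moreover have "card (dg mu) \<le> card (dg lam)" using mu(2) finite_dg by (intro card_mono)
    ultimately have "card (dg mu) < card (dg lam)" using mu(3) assms(2) by linarith
    then obtain kappa where "(remove_rim_hook e)\<^sup>*\<^sup>* mu kappa" "\<not> (\<exists>nu. remove_rim_hook e kappa nu)"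
      using less mu(1) by blast
    thus ?thesis using r by (meson converse_rtranclp_into_rtranclp)
  qed blast
qed

lemma is_ecore_of_flush:
  assumes "is_partition lam" "length lam \<le> m" "0 < e" "is_ecore_of e lam kappa"
  shows "is_partition kappa" "length kappa \<le> m" "flush e (beta m kappa)"
    "runner_count e (beta m kappa) = runner_count e (beta m lam)"
  using remove_rim_hooks_runner_count[of e lam kappa m] no_rim_hook_flush[of kappa m e] assms
  unfolding is_ecore_of_def by auto

lemma is_ecore_of_unique:
  assumes "is_partition lam" "0 < e" "is_ecore_of e lam k1" "is_ecore_of e lam k2"
  shows "k1 = k2"
proof -
  note k1 = is_ecore_of_flush[OF assms(1) order_refl assms(2,3)]
    and k2 = is_ecore_of_flush[OF assms(1) order_refl assms(2,4)]
  have "beta (length lam) k1 = beta (length lam) k2"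
    using flush_eqI[OF finite_beta finite_beta k1(3) k2(3) assms(2)] k1(4) k2(4) by simp
  thus ?thesis using beta_inj[of k1 k2 "length lam"] k1(1,2) k2(1,2) by simp
qed

lemma is_ecore_of_ecore:
  assumes "is_partition lam" "0 < e"
  shows "is_ecore_of e lam (ecore e lam)"
proof -
  obtain kappa where "is_ecore_of e lam kappa" using ex_core[OF assms] unfolding is_ecore_of_def by blast
  hence "\<exists>!kappa. is_ecore_of e lam kappa" using is_ecore_of_unique[OF assms] by blast
  thus ?thesis unfolding ecore_def by (rule theI')
qed

lemma ecore_runner_count:
  assumes "is_partition lam" "0 < e" "length lam \<le> m"
  shows "runner_count e (beta m (ecore e lam)) = runner_count e (beta m lam)"
  using is_ecore_of_flush[OF assms(1,3,2) is_ecore_of_ecore[OF assms(1,2)]] by simp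

lemma ecore_eqI:
  assumes "is_partition lam" "0 < e" "length lam \<le> m" "is_partition kappa" "length kappa \<le> m"
    and "flush e (beta m kappa)" "runner_count e (beta m kappa) = runner_count e (beta m lam)"
  shows "ecore e lam = kappa"
proof -
  note core = is_ecore_of_flush[OF assms(1,3,2) is_ecore_of_ecore[OF assms(1,2)]]
  have "beta m (ecore e lam) = beta m kappa"
    using flush_eqI[OF finite_beta finite_beta core(3) assms(6,2)] core(4) assms(7) by simp
  thus ?thesis using beta_inj[of "ecore e lam" kappa m] core(1,2) assms(4,5) by simp
qed


section \<open>The Kashiwara operator adds an addable node of the given residue\<close>

lemma sorted_wrt_asym_unique:
  assumes asym: "\<And>x y. R x y \<Longrightarrow> \<not> R y x"
  shows "sorted_wrt R xs \<Longrightarrow> sorted_wrt R ys \<Longrightarrow> set xs = set ys \<Longrightarrow>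
    distinct xs \<Longrightarrow> distinct ys \<Longrightarrow> xs = ys"
proof (induction xs arbitrary: ys)
  case (Cons x xs)
  then obtain y ys' where ys: "ys = y # ys'" by (cases ys) auto
  have "x = y"
  proof (rule ccontr)
    assume "x \<noteq> y"
    hence "x \<in> set ys'" "y \<in> set xs" using Cons.prems(3) ys by auto
    hence "R y x" "R x y" using Cons.prems(1,2) ys by auto
    thus False using asym by blast
  qed
  moreover have "set xs = set ys'" using Cons.prems(3-5) ys \<open>x = y\<close> by auto
  ultimately show ?case using Cons ys by simp
qed simp

lemma sig_word_unique:
  assumes "is_sig_word e c i nu w1" "is_sig_word e c i nu w2"
  shows "w1 = w2"
proof -
  have "\<And>x y. node_less c (snd x) (snd y) \<Longrightarrow> \<not> node_less c (snd y) (snd x)"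
    unfolding node_less_def by auto
  thus ?thesis using sorted_wrt_asym_unique[of "\<lambda>x y. node_less c (snd x) (snd y)" w1 w2] assms
    unfolding is_sig_word_def by blast
qed

lemma cancelRA_length: "cancelRA w w' \<Longrightarrow> length w = length w' + 2"
  unfolding cancelRA_def by auto

lemma cancelRA_rtranclp_set: "cancelRA\<^sup>*\<^sup>* w w' \<Longrightarrow> set w' \<subseteq> set w"
  by (induction rule: rtranclp_induct) (auto simp: cancelRA_def)

lemma RA_free_iff: "RA_free w \<longleftrightarrow> \<not> (\<exists>w'. cancelRA w w')"
  unfolding RA_free_def cancelRA_def by auto

lemma cancelRA_overlap_joinable:
  assumes "u1 @ (LR, x1) # (LA, y1) # v1 = u2 @ (LR, x2) # (LA, y2) # v2"
    and "length u1 < length u2"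
  shows "\<exists>w. cancelRA (u1 @ v1) w \<and> cancelRA (u2 @ v2) w"
proof -
  obtain us where us: "u1 @ us = u2" "(LR, x1) # (LA, y1) # v1 = us @ (LR, x2) # (LA, y2) # v2"
    using assms append_eq_append_conv2[of u1 "(LR, x1) # (LA, y1) # v1" u2 "(LR, x2) # (LA, y2) # v2"]
    by auto
  consider "us = []" | z where "us = [z]" | z1 z2 m where "us = z1 # z2 # m"
    by (metis list.exhaust)
  thus ?thesis
  proof cases
    case 3
    hence m: "v1 = m @ (LR, x2) # (LA, y2) # v2" using us by auto
    have "cancelRA (u1 @ v1) (u1 @ m @ v2)" unfolding cancelRA_def m
      by (rule exI[of _ "u1 @ m"], rule exI[of _ v2]) auto
    moreover have "cancelRA (u2 @ v2) (u1 @ m @ v2)" unfolding cancelRA_def using us 3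
      by (intro exI[of _ u1] exI[of _ "m @ v2"]) auto
    ultimately show ?thesis by blast
  qed (use us assms(2) in auto)
qed

lemma cancelRA_local_confluence:
  assumes "cancelRA w w1" "cancelRA w w2"
  shows "w1 = w2 \<or> (\<exists>w3. cancelRA w1 w3 \<and> cancelRA w2 w3)"
proof -
  obtain u1 v1 x1 y1 where o1: "w = u1 @ (LR, x1) # (LA, y1) # v1" "w1 = u1 @ v1"
    using assms(1) unfolding cancelRA_def by blast
  obtain u2 v2 x2 y2 where o2: "w = u2 @ (LR, x2) # (LA, y2) # v2" "w2 = u2 @ v2"
    using assms(2) unfolding cancelRA_def by blast
  consider "length u1 = length u2" | "length u1 < length u2" | "length u2 < length u1" by linarith
  thus ?thesis
  proof cases
    case 1
    have "u1 @ ((LR, x1) # (LA, y1) # v1) = u2 @ ((LR, x2) # (LA, y2) # v2)" using o1 o2 by simp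
    hence "u1 = u2 \<and> (LR, x1) # (LA, y1) # v1 = (LR, x2) # (LA, y2) # v2"
      using append_eq_append_conv[of u1 u2] 1 by blast
    thus ?thesis using o1 o2 by simp
  next
    case 2 thus ?thesis using cancelRA_overlap_joinable[of u1 x1 y1 v1 u2 x2 y2 v2] o1 o2 by auto
  next
    case 3 thus ?thesis using cancelRA_overlap_joinable[of u2 x2 y2 v2 u1 x1 y1 v1] o1 o2 by auto
  qed
qed

lemma cancelRA_normal_form_exists: "\<exists>w'. cancelRA\<^sup>*\<^sup>* w w' \<and> RA_free w'"
proof (induction "length w" arbitrary: w rule: less_induct)
  case less
  show ?case
  proof (cases "RA_free w")
    case False
    then obtain w1 where "cancelRA w w1" using RA_free_iff by blast
    moreover hence "length w1 < length w" using cancelRA_length by fastforce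
    ultimately show ?thesis using less by (meson converse_rtranclp_into_rtranclp)
  qed blast
qed

lemma cancelRA_normal_form_unique:
  "cancelRA\<^sup>*\<^sup>* w w1 \<Longrightarrow> RA_free w1 \<Longrightarrow>
    cancelRA\<^sup>*\<^sup>* w w2 \<Longrightarrow> RA_free w2 \<Longrightarrow> w1 = w2"
proof (induction "length w" arbitrary: w w1 w2 rule: less_induct)
  case less
  show ?case
  proof (cases "RA_free w")
    case True
    thus ?thesis using less.prems by (metis RA_free_iff converse_rtranclpE)
  next
    case False
    obtain a1 where a1: "cancelRA w a1" "cancelRA\<^sup>*\<^sup>* a1 w1"
      using less.prems(1,2) False by (metis converse_rtranclpE)
    obtain a2 where a2: "cancelRA w a2" "cancelRA\<^sup>*\<^sup>* a2 w2"
      using less.prems(3,4) False by (metis converse_rtranclpE)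
    have l1: "length a1 < length w" and l2: "length a2 < length w"
      using a1 a2 cancelRA_length by fastforce+
    from cancelRA_local_confluence[OF a1(1) a2(1)] show ?thesis
    proof
      assume "a1 = a2" thus ?thesis using less.hyps[OF l1] a1 a2 less.prems by blast
    next
      assume "\<exists>w3. cancelRA a1 w3 \<and> cancelRA a2 w3"
      then obtain w3 where w3: "cancelRA a1 w3" "cancelRA a2 w3" by blast
      obtain n3 where n3: "cancelRA\<^sup>*\<^sup>* w3 n3" "RA_free n3" using cancelRA_normal_form_exists by blast
      have "w1 = n3" using less.hyps[OF l1, of w1 n3] a1 less.prems(2) n3 w3(1)
        by (meson converse_rtranclp_into_rtranclp)
      moreover have "w2 = n3" using less.hyps[OF l2, of w2 n3] a2 less.prems(4) n3 w3(2)
        by (meson converse_rtranclp_into_rtranclp)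
      ultimately show ?thesis by simp
    qed
  qed
qed

lemma last_LA_unique:
  assumes "u1 @ (LA, g1) # v1 = u2 @ (LA, g2) # v2"
    and "\<forall>z\<in>set v1. fst z = LR" "\<forall>z\<in>set v2. fst z = LR"
  shows "g1 = g2"
proof -
  let ?P = "\<lambda>z. fst z = LR"
  have "dropWhile ?P (rev v1 @ (LA, g1) # rev u1) = dropWhile ?P (rev v2 @ (LA, g2) # rev u2)"
    using arg_cong[OF assms(1), of rev] by simp
  moreover have "dropWhile ?P (rev v1 @ (LA, g1) # rev u1) = (LA, g1) # rev u1"
    using assms(2) by (simp add: dropWhile_append)
  moreover have "dropWhile ?P (rev v2 @ (LA, g2) # rev u2) = (LA, g2) # rev u2"
    using assms(3) by (simp add: dropWhile_append)
  ultimately show ?thesis by simp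
qed

lemma good_addable_unique:
  assumes "good_addable e c i nu g1" "good_addable e c i nu g2"
  shows "g1 = g2"
proof -
  obtain w w' u v where 1: "is_sig_word e c i nu w" "cancelRA\<^sup>*\<^sup>* w w'" "RA_free w'"
    "w' = u @ (LA, g1) # v" "\<forall>z \<in> set v. fst z = LR"
    using assms(1) unfolding good_addable_def by blast
  obtain ww ww' uu vv where 2: "is_sig_word e c i nu ww" "cancelRA\<^sup>*\<^sup>* ww ww'" "RA_free ww'"
    "ww' = uu @ (LA, g2) # vv" "\<forall>z \<in> set vv. fst z = LR"
    using assms(2) unfolding good_addable_def by blast
  have "w = ww" using sig_word_unique 1 2 by blast
  hence "w' = ww'" using cancelRA_normal_form_unique 1 2 by blast
  thus ?thesis using last_LA_unique 1 2 by metis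
qed

lemma good_addable_addable:
  assumes "good_addable e c i nu g"
  shows "addable_node nu g" "residue e c g = int i"
proof -
  obtain w w' u v where "is_sig_word e c i nu w" "cancelRA\<^sup>*\<^sup>* w w'" "w' = u @ (LA, g) # v"
    using assms unfolding good_addable_def by blast
  hence "(LA, g) \<in> sig_set e c i nu" using cancelRA_rtranclp_set unfolding is_sig_word_def by fastforce
  thus "addable_node nu g" "residue e c g = int i" unfolding sig_set_def by auto
qed

lemma ftilde_SomeE:
  assumes "ftilde e c i mu = Some nu"
  obtains g where "addable_node mu g" "residue e c g = int i" "nu = add_node mu g"
proof -
  have ex: "\<exists>g. good_addable e c i mu g" using assms unfolding ftilde_def by (auto split: if_splits)
  hence nu: "nu = add_node mu (THE g. good_addable e c i mu g)" using assms unfolding ftilde_def by auto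
  have "good_addable e c i mu (THE g. good_addable e c i mu g)"
    using ex good_addable_unique by (metis theI)
  thus ?thesis using that good_addable_addable nu by blast
qed


section \<open>Adding a node moves a bead one step up\<close>

lemma part_of_dg_add_addable:
  assumes lam: "is_partition lam" and ad: "addable lam (a, b)"
  shows "is_partition (part_of_dg (dg lam \<union> {(a, b)}))" "1 \<le> a" "b = part lam a + 1"
    and "\<And>a'. 1 \<le> a' \<Longrightarrow>
      part (part_of_dg (dg lam \<union> {(a, b)})) a' = (if a' = a then part lam a + 1 else part lam a')"
proof -
  have a1: "1 \<le> a" "1 \<le> b" "(a, b) \<notin> dg lam" "a = 1 \<or> (a - 1, b) \<in> dg lam"
    using ad unfolding addable_def by auto
  have b: "b = part lam a + 1" using ad unfolding addable_def dg_part by auto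
  have prev: "part lam a + 1 \<le> part lam (a - 1)" if "a \<noteq> 1" using a1 b that unfolding dg_part by auto
  define f where "f a' = (if a' = a then part lam a + 1 else part lam a')" for a'
  have anti: "f a'' \<le> f a'" if "1 \<le> a'" "a' \<le> a''" for a' a''
  proof -
    have pm: "part lam a'' \<le> part lam a'" using part_antimono[OF lam that] .
    consider "a' = a" | "a'' = a" "a' \<noteq> a" | "a' \<noteq> a" "a'' \<noteq> a" by blast
    thus ?thesis
    proof cases
      case 2
      hence "part lam (a - 1) \<le> part lam a'" "a \<noteq> 1"
        using part_antimono[OF lam, of a' "a - 1"] that by auto
      thus ?thesis using 2 prev by (simp add: f_def)
    qed (use pm in \<open>simp_all add: f_def\<close>)
  qed
  have "a \<le> length lam + 1"
  proof (rule ccontr)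
    assume "\<not> ?thesis"
    hence "a \<noteq> 1" "part lam (a - 1) = 0" by (auto simp: part_zero)
    thus False using prev by simp
  qed
  hence "f a' = 0" if "length lam + 1 < a'" for a' using that by (simp add: f_def part_zero)
  then obtain l where l: "is_partition l" "\<And>a'. 1 \<le> a' \<Longrightarrow> part l a' = f a'"
    using partition_of_antimono[of f "length lam + 1"] anti by blast
  have "dg l = dg lam \<union> {(a, b)}"
    unfolding dg_part using l(2) b a1(1) by (auto simp: f_def le_Suc_eq split: if_splits)
  have l_eq: "part_of_dg (dg lam \<union> {(a, b)}) = l"
    unfolding part_of_dg_def
  proof (rule the_equality)
    show "is_partition l \<and> dg l = dg lam \<union> {(a, b)}" using l(1) \<open>dg l = dg lam \<union> {(a, b)}\<close> by simp
    fix l' assume "is_partition l' \<and> dg l' = dg lam \<union> {(a, b)}"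
    thus "l' = l" using dg_inj[of l' l] l(1) \<open>dg l = dg lam \<union> {(a, b)}\<close> by simp
  qed
  show "is_partition (part_of_dg (dg lam \<union> {(a, b)}))" using l(1) l_eq by simp
  show "1 \<le> a" "b = part lam a + 1" using a1(1) b .
  show "part (part_of_dg (dg lam \<union> {(a, b)})) a' = (if a' = a then part lam a + 1 else part lam a')"
    if "1 \<le> a'" for a'
    using l(2)[OF that] l_eq by (simp add: f_def)
qed

lemma beta_add_addable:
  assumes lam: "is_partition lam" and ad: "addable lam (a, b)"
    and len: "length (part_of_dg (dg lam \<union> {(a, b)})) \<le> m"
  shows "int (bead m lam a) = int b + int m - int a - 1"
    and "bead m lam a \<in> beta m lam" "Suc (bead m lam a) \<notin> beta m lam"
    and "beta m (part_of_dg (dg lam \<union> {(a, b)})) =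
      move_bead (beta m lam) (bead m lam a) (Suc (bead m lam a))"
proof -
  define l where "l = part_of_dg (dg lam \<union> {(a, b)})"
  note new = part_of_dg_add_addable[OF lam ad, folded l_def]
  have "a \<le> m" using new(4)[of a] new(2) part_pos_iff[OF new(1), of a] len l_def by simp
  let ?p = "bead m lam" and ?q = "bead m l"
  have a: "a \<in> {1..m}" using new(2) \<open>a \<le> m\<close> by simp
  have q_a: "?q a = Suc (?p a)" using new(4)[of a] new(2) \<open>a \<le> m\<close> by (simp add: bead_def)
  have q_other: "?q a' = ?p a'" if "1 \<le> a'" "a' \<noteq> a" for a'
    using new(4)[of a'] that by (simp add: bead_def)
  show "int (?p a) = int b + int m - int a - 1" using new(3) \<open>a \<le> m\<close> by (simp add: bead_def)
  show "?p a \<in> beta m lam" using a by (simp add: beta_eq_image_bead)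
  show "Suc (?p a) \<notin> beta m lam"
  proof
    assume "Suc (?p a) \<in> beta m lam"
    then obtain c where c: "c \<in> {1..m}" "?p c = Suc (?p a)" by (auto simp: beta_eq_image_bead)
    hence "c \<noteq> a" by auto
    hence "?q c = ?q a" using q_other[of c] c q_a by simp
    thus False using inj_onD[OF inj_on_bead[OF new(1)] _ c(1) a] len \<open>c \<noteq> a\<close> l_def by simp
  qed
  have "?q ` {1..m} = move_bead (?p ` {1..m}) (?p a) (?q a)"
    using image_shift_segment[OF inj_on_bead[OF lam, of m], of a a ?q] a q_other by auto
  thus "beta m l = move_bead (beta m lam) (?p a) (Suc (?p a))"
    using q_a by (simp add: beta_eq_image_bead)
qed


section \<open>Two-runner abaci and the 2-quotient\<close>

definition interleave :: "nat set \<Rightarrow> nat set \<Rightarrow> nat set" where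
  "interleave X Y = (\<lambda>x. 2 * x) ` X \<union> (\<lambda>y. 2 * y + 1) ` Y"

definition even_halves :: "nat set \<Rightarrow> nat set" where
  "even_halves B = {x div 2 | x. x \<in> B \<and> even x}"

definition odd_halves :: "nat set \<Rightarrow> nat set" where
  "odd_halves B = {(x - 1) div 2 | x. x \<in> B \<and> odd x}"

lemma mem_interleave: "x \<in> interleave X Y \<longleftrightarrow> (if even x then x div 2 \<in> X else x div 2 \<in> Y)"
proof -
  have "x \<in> (\<lambda>x. 2 * x) ` X \<longleftrightarrow> even x \<and> x div 2 \<in> X" by (auto simp: image_iff elim!: evenE)
  moreover have "x \<in> (\<lambda>y. 2 * y + 1) ` Y \<longleftrightarrow> odd x \<and> x div 2 \<in> Y" by (auto simp: image_iff elim!: oddE)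
  ultimately show ?thesis unfolding interleave_def by auto
qed

lemma mem_even_halves: "k \<in> even_halves B \<longleftrightarrow> 2 * k \<in> B"
proof
  assume "k \<in> even_halves B"
  then obtain x where "k = x div 2" "x \<in> B" "even x" unfolding even_halves_def by blast
  thus "2 * k \<in> B" by simp
qed (auto simp: even_halves_def intro!: exI[of _ "2 * k"])

lemma mem_odd_halves: "k \<in> odd_halves B \<longleftrightarrow> 2 * k + 1 \<in> B"
proof
  assume "k \<in> odd_halves B"
  then obtain x where "k = (x - 1) div 2" "x \<in> B" "odd x" unfolding odd_halves_def by blast
  thus "2 * k + 1 \<in> B" by (auto elim!: oddE)
qed (auto simp: odd_halves_def intro!: exI[of _ "2 * k + 1"])

lemma even_halves_interleave: "even_halves (interleave X Y) = X"
  by (auto simp: mem_even_halves mem_interleave)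

lemma odd_halves_interleave: "odd_halves (interleave X Y) = Y"
  by (auto simp: mem_odd_halves mem_interleave)

lemma interleave_halves: "interleave (even_halves B) (odd_halves B) = B"
  by (auto simp: mem_even_halves mem_odd_halves mem_interleave odd_two_times_div_two_succ split: if_splits)

lemma finite_even_halves: "finite B \<Longrightarrow> finite (even_halves B)"
  unfolding even_halves_def by simp

lemma finite_odd_halves: "finite B \<Longrightarrow> finite (odd_halves B)"
  unfolding odd_halves_def by simp

lemma finite_interleave: "finite X \<Longrightarrow> finite Y \<Longrightarrow> finite (interleave X Y)"
  unfolding interleave_def by simp

lemma runner_count_2_interleave:
  assumes "finite X" "finite Y"
  shows "runner_count 2 (interleave X Y) = (\<lambda>r. if r = 0 then card X else if r = 1 then card Y else 0)"
proof
  fix r :: nat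
  have "{x \<in> interleave X Y. x mod 2 = r} =
    (if r = 0 then (\<lambda>x. 2 * x) ` X else if r = 1 then (\<lambda>y. 2 * y + 1) ` Y else {})"
    unfolding interleave_def by auto
  moreover have "card ((\<lambda>x. 2 * x) ` X) = card X" "card ((\<lambda>y. 2 * y + 1) ` Y) = card Y"
    by (auto intro!: card_image inj_onI)
  ultimately show "runner_count 2 (interleave X Y) r = (if r = 0 then card X else if r = 1 then card Y else 0)"
    unfolding runner_count_def by simp
qed

lemma card_interleave:
  assumes "finite X" "finite Y"
  shows "card (interleave X Y) = card X + card Y"
proof -
  have "(\<lambda>x. 2 * x) ` X \<inter> (\<lambda>y. 2 * y + 1) ` Y = {}" by (auto; presburger)
  moreover have "card ((\<lambda>x. 2 * x) ` X) = card X" "card ((\<lambda>y. 2 * y + 1) ` Y) = card Y"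
    by (auto intro!: card_image inj_onI)
  ultimately show ?thesis unfolding interleave_def using assms by (simp add: card_Un_disjoint)
qed

lemma card_even_halves: "finite B \<Longrightarrow> card (even_halves B) = runner_count 2 B 0"
  using card_interleave[of "even_halves B" "odd_halves B"] runner_count_2_interleave[of "even_halves B" "odd_halves B"]
  by (simp add: finite_even_halves finite_odd_halves interleave_halves)

lemma card_odd_halves: "finite B \<Longrightarrow> card (odd_halves B) = runner_count 2 B 1"
  using runner_count_2_interleave[of "even_halves B" "odd_halves B"]
  by (simp add: finite_even_halves finite_odd_halves interleave_halves)

lemma flush_interleave_lessThan: "flush 2 (interleave {..<k0} {..<k1})"
  unfolding flush_def
proof (intro ballI impI)
  fix x assume "x \<in> interleave {..<k0} {..<k1}" "2 \<le> x"
  moreover obtain k where "x = k + 2" using \<open>2 \<le> x\<close> le_Suc_ex by (metis add.commute)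
  ultimately show "x - 2 \<in> interleave {..<k0} {..<k1}" by (simp add: mem_interleave split: if_splits)
qed

lemma even_halves_shift2: "even_halves (insert 0 (Suc ` insert 0 (Suc ` B))) = insert 0 (Suc ` even_halves B)"
proof (rule set_eqI)
  fix k
  show "k \<in> even_halves (insert 0 (Suc ` insert 0 (Suc ` B))) \<longleftrightarrow> k \<in> insert 0 (Suc ` even_halves B)"
    by (cases k) (auto simp: mem_even_halves)
qed

lemma odd_halves_shift2: "odd_halves (insert 0 (Suc ` insert 0 (Suc ` B))) = insert 0 (Suc ` odd_halves B)"
proof (rule set_eqI)
  fix k
  show "k \<in> odd_halves (insert 0 (Suc ` insert 0 (Suc ` B))) \<longleftrightarrow> k \<in> insert 0 (Suc ` odd_halves B)"
    by (cases k) (auto simp: mem_odd_halves)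
qed

lemma quot2_eq_halves:
  assumes "is_partition lam" "length lam \<le> M" "odd M"
  shows "quot2 lam = (pi_beta (even_halves (beta M lam)), pi_beta (odd_halves (beta M lam)))"
proof -
  define M0 where "M0 = odd_size lam"
  have M0: "odd M0" "length lam \<le> M0" "M0 \<le> M"
    using assms(2,3) unfolding M0_def odd_size_def by (auto simp: le_eq_less_or_eq)
  obtain j where M: "M = M0 + 2 * j" using M0 assms(3) by (metis dvd_diff_nat le_add_diff_inverse odd_add evenE)
  have "(pi_beta (even_halves (beta (M0 + 2 * j) lam)), pi_beta (odd_halves (beta (M0 + 2 * j) lam))) =
      (pi_beta (even_halves (beta M0 lam)), pi_beta (odd_halves (beta M0 lam)))"
  proof (induction j)
    case (Suc j)
    let ?n = "M0 + 2 * j"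
    have "length lam \<le> ?n" using M0 by simp
    hence "beta (M0 + 2 * Suc j) lam = insert 0 (Suc ` insert 0 (Suc ` beta ?n lam))"
      using beta_Suc[of lam "Suc ?n"] beta_Suc[of lam ?n] by simp
    thus ?case using Suc even_halves_shift2 odd_halves_shift2
        pi_beta_insert_0_Suc[OF finite_even_halves[OF finite_beta]]
        pi_beta_insert_0_Suc[OF finite_odd_halves[OF finite_beta]] by simp
  qed simp
  moreover have "quot2 lam = (pi_beta (even_halves (beta M0 lam)), pi_beta (odd_halves (beta M0 lam)))"
    unfolding quot2_def M0_def even_halves_def odd_halves_def Let_def ..
  ultimately show ?thesis using M by simp
qed


section \<open>The partition \<open>Phi t nu\<close> and its beta-sets\<close>

lemma length_staircase: "length (staircase t) = t"
  by (simp add: staircase_def)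

lemma part_staircase: "part (staircase t) a = (if 1 \<le> a \<and> a \<le> t then t + 1 - a else 0)"
  by (auto simp: part_def staircase_def rev_nth simp del: upt_Suc)

lemma is_partition_staircase: "is_partition (staircase t)"
  unfolding is_partition_def staircase_def by (simp add: sorted_wrt_rev del: upt_Suc)

text \<open>The runner sizes of a 2-abacus of the staircase \<open>Delta_t\<close> in which both runners carry at
  least \<open>N\<close> beads; their sum is odd, as the 2-quotient requires.\<close>
definition even_runner_size :: "nat \<Rightarrow> nat \<Rightarrow> nat" where
  "even_runner_size t N = (if even t then N + 1 + t else N)"

definition odd_runner_size :: "nat \<Rightarrow> nat \<Rightarrow> nat" where
  "odd_runner_size t N = (if even t then N else N + t)"

definition Phi_size :: "nat \<Rightarrow> nat \<Rightarrow> nat" where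
  "Phi_size t N = even_runner_size t N + odd_runner_size t N"

lemma odd_Phi_size: "odd (Phi_size t N)"
  by (simp add: Phi_size_def even_runner_size_def odd_runner_size_def)

lemma runner_size_ge:
  "N \<le> even_runner_size t N" "N \<le> odd_runner_size t N" "N \<le> Phi_size t N" "t \<le> Phi_size t N"
  by (auto simp: Phi_size_def even_runner_size_def odd_runner_size_def)

lemma beta_staircase:
  "beta (Phi_size t N) (staircase t) = interleave {..<even_runner_size t N} {..<odd_runner_size t N}"
proof (rule card_subset_eq)
  let ?M = "Phi_size t N"
  show "finite (interleave {..<even_runner_size t N} {..<odd_runner_size t N})"
    by (simp add: finite_interleave)
  show "beta ?M (staircase t) \<subseteq> interleave {..<even_runner_size t N} {..<odd_runner_size t N}"
  proof
    fix v assume "v \<in> beta ?M (staircase t)"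
    then obtain a where a: "1 \<le> a" "a \<le> ?M" "v = (if a \<le> t then t + 1 - a else 0) + ?M - a"
      unfolding beta_eq_image_bead bead_def part_staircase by auto
    show "v \<in> interleave {..<even_runner_size t N} {..<odd_runner_size t N}"
      using a unfolding mem_interleave Phi_size_def even_runner_size_def odd_runner_size_def
      by (cases "even t"; cases "a \<le> t") (auto; presburger)+
  qed
  show "card (beta ?M (staircase t)) = card (interleave {..<even_runner_size t N} {..<odd_runner_size t N})"
    using card_beta[OF is_partition_staircase] length_staircase runner_size_ge card_interleave
    by (simp add: Phi_size_def)
qed

definition bar_swap :: "nat \<Rightarrow> bipartition \<Rightarrow> bipartition" where
  "bar_swap t nu = (if even t then nu else prod.swap nu)"

definition Phi_beta :: "nat \<Rightarrow> nat \<Rightarrow> bipartition \<Rightarrow> nat set" where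
  "Phi_beta t N nu = interleave (beta (even_runner_size t N) (fst (bar_swap t nu)))
     (beta (odd_runner_size t N) (snd (bar_swap t nu)))"

definition is_Phi :: "nat \<Rightarrow> bipartition \<Rightarrow> nat list \<Rightarrow> bool" where
  "is_Phi t nu L \<longleftrightarrow> is_partition L \<and> ecore 2 L = staircase t \<and> barquot2 t L = nu"

lemma barquot2_eq_iff: "barquot2 t L = nu \<longleftrightarrow> quot2 L = bar_swap t nu"
  unfolding barquot2_def bar_swap_def by (cases "quot2 L", cases nu) auto

lemma bar_swap_partitions:
  assumes "is_partition (fst nu)" "is_partition (snd nu)" "length (fst nu) \<le> N" "length (snd nu) \<le> N"
  shows "is_partition (fst (bar_swap t nu))" "is_partition (snd (bar_swap t nu))"
    "length (fst (bar_swap t nu)) \<le> even_runner_size t N" "length (snd (bar_swap t nu)) \<le> odd_runner_size t N"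
  using assms runner_size_ge[of N t] by (auto simp: bar_swap_def)

lemma finite_Phi_beta: "finite (Phi_beta t N nu)"
  unfolding Phi_beta_def by (intro finite_interleave finite_beta)

lemma runner_count_Phi_beta:
  assumes "is_partition (fst nu)" "is_partition (snd nu)" "length (fst nu) \<le> N" "length (snd nu) \<le> N"
  shows "runner_count 2 (Phi_beta t N nu) = runner_count 2 (beta (Phi_size t N) (staircase t))"
proof -
  note parts = bar_swap_partitions[OF assms, of t]
  show ?thesis using card_beta[OF parts(1)] card_beta[OF parts(2)]
    by (intro ext) (simp add: Phi_beta_def beta_staircase runner_count_2_interleave finite_beta)
qed

lemma is_Phi_pi_beta:
  assumes "is_partition (fst nu)" "is_partition (snd nu)" "length (fst nu) \<le> N" "length (snd nu) \<le> N"
  shows "is_Phi t nu (pi_beta (Phi_beta t N nu))"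
proof -
  let ?M = "Phi_size t N" and ?S = "Phi_beta t N nu"
  note parts = bar_swap_partitions[OF assms, of t]
  have "card ?S = ?M"
    unfolding Phi_beta_def using card_interleave[OF finite_beta finite_beta] card_beta parts
    by (simp add: Phi_size_def)
  hence L: "is_partition (pi_beta ?S)" "length (pi_beta ?S) \<le> ?M" "beta ?M (pi_beta ?S) = ?S"
    using pi_beta[OF finite_Phi_beta, of t N nu] by simp_all
  have "ecore 2 (pi_beta ?S) = staircase t"
  proof (rule ecore_eqI[OF L(1) _ L(2) is_partition_staircase])
    show "length (staircase t) \<le> ?M" using length_staircase runner_size_ge by simp
    show "flush 2 (beta ?M (staircase t))" unfolding beta_staircase by (rule flush_interleave_lessThan)
    show "runner_count 2 (beta ?M (staircase t)) = runner_count 2 (beta ?M (pi_beta ?S))"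
      using runner_count_Phi_beta[OF assms] L(3) by simp
  qed simp
  moreover have "quot2 (pi_beta ?S) = bar_swap t nu"
    using quot2_eq_halves[OF L(1,2) odd_Phi_size] L(3) parts pi_beta_beta
    by (simp add: Phi_beta_def even_halves_interleave odd_halves_interleave)
  ultimately show ?thesis using L(1) unfolding is_Phi_def barquot2_eq_iff by simp
qed

lemma beta_is_Phi:
  assumes "is_partition (fst nu)" "is_partition (snd nu)" "length (fst nu) \<le> N" "length (snd nu) \<le> N"
    and L: "is_Phi t nu L" "length L \<le> Phi_size t N"
  shows "beta (Phi_size t N) L = Phi_beta t N nu"
proof -
  let ?M = "Phi_size t N" and ?B = "beta (Phi_size t N) L"
  note parts = bar_swap_partitions[OF assms(1-4), of t]
  have L': "is_partition L" "ecore 2 L = staircase t" "quot2 L = bar_swap t nu"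
    using L(1) unfolding is_Phi_def barquot2_eq_iff by auto
  have "runner_count 2 ?B = runner_count 2 (interleave {..<even_runner_size t N} {..<odd_runner_size t N})"
    using ecore_runner_count[of L 2 ?M] L'(1,2) L(2) beta_staircase by simp
  hence "card (even_halves ?B) = even_runner_size t N" "card (odd_halves ?B) = odd_runner_size t N"
    using card_even_halves[OF finite_beta] card_odd_halves[OF finite_beta]
    by (simp_all add: runner_count_2_interleave)
  moreover have "pi_beta (even_halves ?B) = fst (bar_swap t nu)" "pi_beta (odd_halves ?B) = snd (bar_swap t nu)"
    using quot2_eq_halves[OF L'(1) L(2) odd_Phi_size] L'(3) by (metis fst_conv snd_conv)+
  ultimately have "even_halves ?B = beta (even_runner_size t N) (fst (bar_swap t nu))"
    and "odd_halves ?B = beta (odd_runner_size t N) (snd (bar_swap t nu))"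
    using pi_beta(3)[OF finite_even_halves[OF finite_beta], of ?M L]
      pi_beta(3)[OF finite_odd_halves[OF finite_beta], of ?M L] by simp_all
  thus ?thesis unfolding Phi_beta_def using interleave_halves[of ?B] by simp
qed

lemma is_Phi_Phi:
  assumes "is_partition (fst nu)" "is_partition (snd nu)"
  shows "is_Phi t nu (Phi t nu)"
proof -
  define N0 where "N0 = max (length (fst nu)) (length (snd nu))"
  have ex: "is_Phi t nu (pi_beta (Phi_beta t N0 nu))" using is_Phi_pi_beta[OF assms] N0_def by simp
  have "L1 = L2" if "is_Phi t nu L1" "is_Phi t nu L2" for L1 L2
  proof -
    define N where "N = max N0 (max (length L1) (length L2))"
    have l: "length (fst nu) \<le> N" "length (snd nu) \<le> N"
      "length L1 \<le> Phi_size t N" "length L2 \<le> Phi_size t N"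
      using runner_size_ge[of N t] by (auto simp: N_def N0_def)
    have "beta (Phi_size t N) L1 = beta (Phi_size t N) L2"
      using beta_is_Phi[OF assms l(1,2) that(1) l(3)] beta_is_Phi[OF assms l(1,2) that(2) l(4)] by simp
    thus ?thesis using beta_inj[of L1 L2] that l unfolding is_Phi_def by simp
  qed
  hence "\<exists>!L. is_Phi t nu L" using ex by blast
  thus ?thesis unfolding Phi_def is_Phi_def[symmetric] by (rule theI')
qed


section \<open>Residues of the moved beads\<close>

lemma interleave_move_even:
  assumes "y \<in> X" "Suc y \<notin> X"
  shows "2 * y \<in> interleave X Y" "2 * y + 2 \<notin> interleave X Y"
    and "interleave (move_bead X y (Suc y)) Y = move_bead (interleave X Y) (2 * y) (2 * y + 2)"
proof -
  show "2 * y \<in> interleave X Y" "2 * y + 2 \<notin> interleave X Y"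
    using assms by (simp_all add: mem_interleave)
  show "interleave (move_bead X y (Suc y)) Y = move_bead (interleave X Y) (2 * y) (2 * y + 2)"
  proof (rule set_eqI)
    fix x
    have "x div 2 = Suc y \<longleftrightarrow> x = 2 * y + 2" "x div 2 = y \<longleftrightarrow> x = 2 * y" if "even x"
      using that by (auto elim!: evenE)
    moreover have "x \<noteq> 2 * y + 2" "x \<noteq> 2 * y" if "odd x" using that by auto
    ultimately show "x \<in> interleave (move_bead X y (Suc y)) Y \<longleftrightarrow>
        x \<in> move_bead (interleave X Y) (2 * y) (2 * y + 2)"
      by (cases "even x") (auto simp: mem_interleave move_bead_def)
  qed
qed

lemma interleave_move_odd:
  assumes "y \<in> Y" "Suc y \<notin> Y"
  shows "2 * y + 1 \<in> interleave X Y" "2 * y + 1 + 2 \<notin> interleave X Y"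
    and "interleave X (move_bead Y y (Suc y)) = move_bead (interleave X Y) (2 * y + 1) (2 * y + 1 + 2)"
proof -
  show "2 * y + 1 \<in> interleave X Y" "2 * y + 1 + 2 \<notin> interleave X Y"
    using assms by (simp_all add: mem_interleave)
  show "interleave X (move_bead Y y (Suc y)) = move_bead (interleave X Y) (2 * y + 1) (2 * y + 1 + 2)"
  proof (rule set_eqI)
    fix x
    have "x div 2 = Suc y \<longleftrightarrow> x = 2 * y + 1 + 2" "x div 2 = y \<longleftrightarrow> x = 2 * y + 1" if "odd x"
      using that by (auto elim!: oddE)
    moreover have "x \<noteq> 2 * y + 1 + 2" "x \<noteq> 2 * y + 1" if "even x" using that by auto
    ultimately show "x \<in> interleave X (move_bead Y y (Suc y)) \<longleftrightarrow>
        x \<in> move_bead (interleave X Y) (2 * y + 1) (2 * y + 1 + 2)"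
      by (cases "even x") (auto simp: mem_interleave move_bead_def)
  qed
qed

definition Phi_offset :: "nat \<Rightarrow> nat \<Rightarrow> int" where
  "Phi_offset t N = 2 * int N - 1 - of_bool (odd t)"

lemma Phi_beta_add_node:
  assumes mu: "is_partition (fst mu)" "is_partition (snd mu)"
    and ad: "addable_node mu (a, b, j)" and oe: "odd e"
    and N: "length (fst (add_node mu (a, b, j))) \<le> N" "length (snd (add_node mu (a, b, j))) \<le> N"
  obtains z where "z \<in> Phi_beta t N mu" "z + 2 \<notin> Phi_beta t N mu"
    "Phi_beta t N (add_node mu (a, b, j)) = move_bead (Phi_beta t N mu) z (z + 2)"
    "int z = 2 * content (charge e t) (a, b, j) + Phi_offset t N + of_bool (j = 1) * int e"
proof -
  note result = that
  let ?nu = "add_node mu (a, b, j)" and ?c = "content (charge e t) (a, b, j)"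
  have half_e: "2 * ((1 - int e) div 2) = 1 - int e" using oe by (simp add: dvd_mult_div_cancel)
  have even_runner: thesis if "Phi_beta t N mu = interleave X Y"
    "Phi_beta t N ?nu = interleave (move_bead X y (Suc y)) Y" "y \<in> X" "Suc y \<notin> X"
    "int (2 * y) = 2 * ?c + Phi_offset t N + of_bool (j = 1) * int e" for X Y y
    using interleave_move_even[OF that(3,4), of Y] that(1,2,5) by (intro result) auto
  have odd_runner: thesis if "Phi_beta t N mu = interleave X Y"
    "Phi_beta t N ?nu = interleave X (move_bead Y y (Suc y))" "y \<in> Y" "Suc y \<notin> Y"
    "int (2 * y + 1) = 2 * ?c + Phi_offset t N + of_bool (j = 1) * int e" for X Y y
    using interleave_move_odd[OF that(3,4), of X] that(1,2,5) by (intro result) auto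
  consider "j = 1" "addable (fst mu) (a, b)" | "j = 2" "addable (snd mu) (a, b)"
    using ad unfolding addable_node_def comp_def by auto
  thus thesis
  proof cases
    case 1
    let ?l = "part_of_dg (dg (fst mu) \<union> {(a, b)})"
    have nu: "?nu = (?l, snd mu)" using 1 by (simp add: add_node_def)
    note move = beta_add_addable[OF mu(1) 1(2)]
    have c: "?c = int b - int a + int t + (1 - int e) div 2" using 1 by (simp add: content_def charge_def)
    show thesis
    proof (cases "even t")
      case True
      let ?k = "even_runner_size t N"
      have "length ?l \<le> ?k" using N nu runner_size_ge[of N t] by simp
      from move[OF this] show thesis using True nu c half_e 1
        by (intro even_runner[of _ _ "bead ?k (fst mu) a"])
          (auto simp: Phi_beta_def bar_swap_def even_runner_size_def Phi_offset_def)
    next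
      case False
      let ?k = "odd_runner_size t N"
      have "length ?l \<le> ?k" using N nu runner_size_ge[of N t] by simp
      from move[OF this] show thesis using False nu c half_e 1
        by (intro odd_runner[of _ _ "bead ?k (fst mu) a"])
          (auto simp: Phi_beta_def bar_swap_def odd_runner_size_def Phi_offset_def)
    qed
  next
    case 2
    let ?l = "part_of_dg (dg (snd mu) \<union> {(a, b)})"
    have nu: "?nu = (fst mu, ?l)" using 2 by (simp add: add_node_def)
    note move = beta_add_addable[OF mu(2) 2(2)]
    have c: "?c = int b - int a" using 2 by (simp add: content_def charge_def)
    show thesis
    proof (cases "even t")
      case True
      let ?k = "odd_runner_size t N"
      have "length ?l \<le> ?k" using N nu runner_size_ge[of N t] by simp
      from move[OF this] show thesis using True nu c 2
        by (intro odd_runner[of _ _ "bead ?k (snd mu) a"])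
          (auto simp: Phi_beta_def bar_swap_def odd_runner_size_def Phi_offset_def)
    next
      case False
      let ?k = "even_runner_size t N"
      have "length ?l \<le> ?k" using N nu runner_size_ge[of N t] by simp
      from move[OF this] show thesis using False nu c 2
        by (intro even_runner[of _ _ "bead ?k (snd mu) a"])
          (auto simp: Phi_beta_def bar_swap_def even_runner_size_def Phi_offset_def)
    qed
  qed
qed


lemma runner_count_shift_two_mod_eq:
  assumes "finite S" "z1 \<in> S" "z1 + 2 \<notin> S" "z2 \<in> S" "z2 + 2 \<notin> S" "3 \<le> e"
    and "runner_count e (move_bead S z1 (z1 + 2)) = runner_count e (move_bead S z2 (z2 + 2))"
  shows "z1 mod e = z2 mod e"
proof (rule ccontr)
  let ?r = "z1 mod e"
  assume ne: "z1 mod e \<noteq> z2 mod e"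
  have "(z + 2) mod e \<noteq> z mod e" for z
  proof
    assume "(z + 2) mod e = z mod e"
    hence "e dvd 2" by (metis add.commute mod_add_self2 mod_eq_dvd_iff_nat le_add2 add_diff_cancel_right')
    thus False using assms(6) by (auto dest: dvd_imp_le)
  qed
  hence "runner_count e (move_bead S z1 (z1 + 2)) ?r + 1 = runner_count e S ?r"
    using runner_count_move_bead[OF assms(1-3), of e ?r] by simp
  moreover have "runner_count e S ?r \<le> runner_count e (move_bead S z2 (z2 + 2)) ?r"
    using runner_count_move_bead[OF assms(1,4,5), of e ?r] ne by simp
  ultimately show False using assms(7) by simp
qed

lemma odd_mod_double_inj:
  fixes e j1 j2 :: nat and D :: int
  assumes "odd e" "j1 < e" "j2 < e" "(2 * int j1 + D) mod int e = (2 * int j2 + D) mod int e"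
  shows "j1 = j2"
proof -
  have "int e dvd 2 * (int j1 - int j2)"
    using assms(4) mod_eq_dvd_iff[of "2 * int j1 + D"] by (simp add: algebra_simps)
  moreover have "coprime (int e) 2" using assms(1) by (simp add: coprime_commute)
  ultimately have "int e dvd int j1 - int j2" using coprime_dvd_mult_right_iff by blast
  thus ?thesis using assms(2,3) dvd_imp_le_int[of "int j1 - int j2" "int e"] by (cases "j1 = j2") auto
qed

lemma ecore_Phi_ftilde:
  assumes mu: "is_partition (fst mu)" "is_partition (snd mu)"
    and f: "ftilde e (charge e t) j mu = Some nu" and e: "odd e" "1 < e"
    and N: "length (fst nu) \<le> N" "length (snd nu) \<le> N" "length (Phi t nu) \<le> Phi_size t N"
  obtains z where "z \<in> Phi_beta t N mu" "z + 2 \<notin> Phi_beta t N mu"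
    "int z mod int e = (2 * int j + Phi_offset t N) mod int e"
    "runner_count e (beta (Phi_size t N) (ecore e (Phi t nu))) =
      runner_count e (move_bead (Phi_beta t N mu) z (z + 2))"
proof -
  obtain g where g: "addable_node mu g" "residue e (charge e t) g = int j" and nu: "nu = add_node mu g"
    using f by (rule ftilde_SomeE)
  obtain a b c where g_abc: "g = (a, b, c)" by (rule prod_cases3)
  obtain z where z: "z \<in> Phi_beta t N mu" "z + 2 \<notin> Phi_beta t N mu"
    and beta_nu: "Phi_beta t N (add_node mu g) = move_bead (Phi_beta t N mu) z (z + 2)"
    and int_z: "int z = 2 * content (charge e t) g + Phi_offset t N + of_bool (c = 1) * int e"
    using Phi_beta_add_node[OF mu, of a b c e N t] g(1) e(1) N(1,2) unfolding nu g_abc by metis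
  have "int z mod int e = (2 * content (charge e t) g + Phi_offset t N) mod int e"
    unfolding int_z by simp
  also have "\<dots> = (2 * (content (charge e t) g mod int e) + Phi_offset t N) mod int e"
    by (metis mod_add_left_eq mod_mult_right_eq)
  finally have z_mod: "int z mod int e = (2 * int j + Phi_offset t N) mod int e"
    using g(2) unfolding residue_def by simp
  have parts: "is_partition (fst nu)" "is_partition (snd nu)"
    using part_of_dg_add_addable(1) mu g(1) unfolding nu g_abc addable_node_def add_node_def comp_def
    by (auto split: if_splits)
  have "is_Phi t nu (Phi t nu)" using is_Phi_Phi[OF parts] .
  hence "runner_count e (beta (Phi_size t N) (ecore e (Phi t nu))) = runner_count e (Phi_beta t N nu)"
    using ecore_runner_count[of _ e, OF _ _ N(3)] beta_is_Phi[OF parts N(1,2) _ N(3)] e(2)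
    unfolding is_Phi_def by simp
  thus thesis using that z z_mod beta_nu nu by simp
qed

theorem proposition7p9:
  fixes e t j1 j2 :: nat and mu nu1 nu2 :: "nat list \<times> nat list"
  assumes "e > 1" and "odd e"
    and "is_partition (fst mu)" and "is_partition (snd mu)"
    and "j1 \<le> e - 1" and "j2 \<le> e - 1" and "j1 \<noteq> j2"
    and "ftilde e (charge e t) j1 mu = Some nu1"
    and "ftilde e (charge e t) j2 mu = Some nu2"
  shows "ecore e (Phi t nu1) \<noteq> ecore e (Phi t nu2)"
proof
  assume eq: "ecore e (Phi t nu1) = ecore e (Phi t nu2)"
  define N where "N = Max {length (fst nu1), length (snd nu1), length (fst nu2), length (snd nu2),
    length (Phi t nu1), length (Phi t nu2)}"
  have N: "length (fst nu1) \<le> N" "length (snd nu1) \<le> N" "length (fst nu2) \<le> N" "length (snd nu2) \<le> N"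
    "length (Phi t nu1) \<le> Phi_size t N" "length (Phi t nu2) \<le> Phi_size t N"
    using runner_size_ge(3)[of N t] unfolding N_def by (simp_all add: le_max_iff_disj)
  let ?S = "Phi_beta t N mu" and ?D = "Phi_offset t N"
  obtain z1 where z1: "z1 \<in> ?S" "z1 + 2 \<notin> ?S" "int z1 mod int e = (2 * int j1 + ?D) mod int e"
    "runner_count e (beta (Phi_size t N) (ecore e (Phi t nu1))) = runner_count e (move_bead ?S z1 (z1 + 2))"
    using ecore_Phi_ftilde[OF assms(3,4,8,2,1) N(1,2,5)] .
  obtain z2 where z2: "z2 \<in> ?S" "z2 + 2 \<notin> ?S" "int z2 mod int e = (2 * int j2 + ?D) mod int e"
    "runner_count e (beta (Phi_size t N) (ecore e (Phi t nu2))) = runner_count e (move_bead ?S z2 (z2 + 2))"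
    using ecore_Phi_ftilde[OF assms(3,4,9,2,1) N(3,4,6)] .
  have "3 \<le> e" using assms(1,2) by presburger
  hence "z1 mod e = z2 mod e"
    using runner_count_shift_two_mod_eq[OF finite_Phi_beta z1(1,2) z2(1,2)] z1(4) z2(4) eq by simp
  hence "(2 * int j1 + ?D) mod int e = (2 * int j2 + ?D) mod int e"
    using z1(3) z2(3) by (metis of_nat_mod)
  thus False using odd_mod_double_inj[OF assms(2)] assms(1,5,6,7) by auto
qed

end
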